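(* Let $v:\mathbb X\times\mathbb X\to[0,\infty]$ be a measurable symmetric pair potential and $z:\mathbb X\to[0,\infty)$ measurable. The following are equivalent: (i) $T_q^\circ(z)<\infty$ for all $q\in\mathbb X$; (ii) there exists a measurable function $a:\mathbb X\to[0,\infty)$ such that $\int_{\mathbb X}|f(q,y)|e^{a(y)}\,d\lambda_z(y)\le a(q)$ for all $q\in\mathbb X$.
   Context: $(\mathbb X,\mathcal X)$ is a complete separable metric space with Borel $\sigma$-algebra, $\lambda$ a measure on it finite on bounded sets, $\lambda_z(dx)=z(x)\lambda(dx)$, $f(x,y)=e^{-v(x,y)}-1$ (with $e^{-\infty}=0$). For $n\in\mathbb N$, $\mathcal T_n^\circ$ is the set of (labelled) trees with vertex set $\{0,1,\dots,n\}$. For $q\in\mathbb X$ define $$T_q^\circ(z)=1+\sum_{n=1}^\infty\frac1{n!}\int_{\mathbb X^n}\sum_{T\in\mathcal T_n^\circ}\prod_{\{i,j\}\in E(T)}|f(x_i,x_j)|\,d\lambda_z(x_1)\cdots d\lambda_z(x_n),\qquad x_0:=q,$$ a quantity in $[1,\infty]$. *)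

theory Defs
  imports "HOL-Analysis.Analysis"
begin

text \<open>Labelled trees on a finite vertex set V: a set of 2-element edges inside V that
  connects V and has exactly card V - 1 edges (equivalently, a connected acyclic graph).\<close>
definition is_tree :: "nat set \<Rightarrow> nat set set \<Rightarrow> bool" where
  "is_tree V E \<longleftrightarrow>
     E \<subseteq> {e. \<exists>i j. e = {i, j} \<and> i \<noteq> j \<and> i \<in> V \<and> j \<in> V} \<and>
     card E + 1 = card V \<and>
     (\<forall>i\<in>V. \<forall>j\<in>V. (i, j) \<in> {(a, b). {a, b} \<in> E}\<^sup>*)"

definition trees :: "nat \<Rightarrow> nat set set set" where
  "trees n = {E. is_tree {0..n} E}"

text \<open>|f(x,y)| = |exp(-v(x,y)) - 1| = 1 - exp(-v(x,y)), with exp(-\<infinity>) = 0.\<close>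
definition mayer_abs :: "('a \<Rightarrow> 'a \<Rightarrow> ennreal) \<Rightarrow> 'a \<Rightarrow> 'a \<Rightarrow> ennreal" where
  "mayer_abs v x y = (if v x y = top then 1 else ennreal (1 - exp (- enn2real (v x y))))"

definition lam_z :: "'a measure \<Rightarrow> ('a \<Rightarrow> real) \<Rightarrow> 'a measure" where
  "lam_z lam z = density lam (\<lambda>x. ennreal (z x))"

definition T_circ :: "'a measure \<Rightarrow> ('a \<Rightarrow> 'a \<Rightarrow> ennreal) \<Rightarrow> ('a \<Rightarrow> real) \<Rightarrow> 'a \<Rightarrow> ennreal" where
  "T_circ lam v z q = 1 + (\<Sum>m. let n = Suc m in
      ennreal (1 / fact n) *
      (\<integral>\<^sup>+ x. (\<Sum>E\<in>trees n. \<Prod>e\<in>E. mayer_abs v ((x(0 := q)) (Min e)) ((x(0 := q)) (Max e)))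
        \<partial>(PiM {1..n} (\<lambda>_. lam_z lam z))))"

end

theory Submission
  imports Defs "HOL-Computational_Algebra.Formal_Power_Series"
begin

text \<open>
  Write \<open>G\<^sub>n(q)\<close> for the \<open>n\<close>-th integral in \<open>T\<^sub>q\<^sup>\<circ>(z)\<close>, so that \<open>T\<^sub>q\<^sup>\<circ>(z) = \<Sum>\<^sub>n G\<^sub>n(q) / n!\<close>, and
  \<open>g\<^sub>j(q) = \<integral>|f(q,y)| G\<^sub>j(y) d\<lambda>\<^sub>z(y)\<close>. Cutting a tree on \<open>{0, \<dots>, n + 1}\<close> at the edge that joins the
  root \<open>0\<close> to the branch containing the vertex \<open>1\<close> gives
  \<open>G\<^sub>n\<^sub>+\<^sub>1 = \<Sum>\<^sub>j (n choose j) (j + 1) g\<^sub>j G\<^sub>n\<^sub>-\<^sub>j\<close>. For the generating functions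
  \<open>A(t) = \<Sum> G\<^sub>n t\<^sup>n / n!\<close> and \<open>B(t) = \<Sum> g\<^sub>j t\<^sup>j\<^sup>+\<^sup>1 / j!\<close> this says \<open>A' = A B'\<close>, i.e.
  \<open>A = exp B\<close>, and at \<open>t = 1\<close> formally \<open>T\<^sub>q\<^sup>\<circ> = exp (\<integral>|f(q,y)| T\<^sub>y\<^sup>\<circ> d\<lambda>\<^sub>z(y))\<close>.
  Hence if all \<open>T\<^sub>q\<^sup>\<circ>\<close> are finite, \<open>a = ln T\<^sup>\<circ>\<close> satisfies (ii). Conversely, for \<open>a\<close> as in (ii),
  truncating the exponential series gives \<open>\<Sum>\<^sub>n\<^sub>\<le>\<^sub>N G\<^sub>n(q) / n! \<le> exp (\<Sum>\<^sub>j\<^sub><\<^sub>N g\<^sub>j(q) / j!)\<close>,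
  and induction on \<open>N\<close> bounds the right-hand side by \<open>exp (\<integral>|f(q,y)| e\<^sup>a\<^sup>(\<^sup>y\<^sup>) d\<lambda>\<^sub>z(y)) \<le> e\<^sup>a\<^sup>(\<^sup>q\<^sup>)\<close>.
\<close>

unbundle no vec_syntax
unbundle fps_syntax

section \<open>Exponentials of power series with nonnegative coefficients\<close>

lemma fps_power_nth_nonneg:
  fixes B :: "'a::linordered_semidom fps"
  assumes "\<And>n. B $ n \<ge> 0"
  shows "(B ^ k) $ n \<ge> 0"
proof (induction k arbitrary: n)
  case 0
  then show ?case by simp
next
  case (Suc k)
  then show ?case by (simp add: fps_mult_nth assms sum_nonneg)
qed

lemma sum_atMost_fps_mult_nth:
  fixes F H :: "'a::comm_semiring_1 fps"
  shows "(\<Sum>n\<le>N. (F * H) $ n) = (\<Sum>(i, j)\<in>{(i, j). i + j \<le> N}. F $ i * H $ j)"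
  by (simp add: fps_mult_nth atLeast0AtMost sum.triangle_reindex_eq[where g="\<lambda>i j. F $ i * H $ j"])

lemma sum_atMost_fps_power_le:
  fixes B :: "'a::linordered_semidom fps"
  assumes nonneg: "\<And>n. B $ n \<ge> 0"
  shows "(\<Sum>n\<le>N. (B ^ k) $ n) \<le> (\<Sum>n\<le>N. B $ n) ^ k"
proof (induction k)
  case 0
  then show ?case by simp
next
  case (Suc k)
  have "(\<Sum>n\<le>N. (B ^ Suc k) $ n) = (\<Sum>(i, j)\<in>{(i, j). i + j \<le> N}. B $ i * (B ^ k) $ j)"
    by (simp add: sum_atMost_fps_mult_nth)
  also have "\<dots> \<le> (\<Sum>(i, j)\<in>{..N} \<times> {..N}. B $ i * (B ^ k) $ j)"
    by (rule sum_mono2) (auto intro!: mult_nonneg_nonneg nonneg fps_power_nth_nonneg)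
  also have "\<dots> = (\<Sum>i\<le>N. B $ i) * (\<Sum>j\<le>N. (B ^ k) $ j)"
    by (simp add: sum_product sum.cartesian_product)
  also have "\<dots> \<le> (\<Sum>i\<le>N. B $ i) * (\<Sum>n\<le>N. B $ n) ^ k"
    by (rule mult_left_mono[OF Suc]) (auto intro: sum_nonneg nonneg)
  finally show ?case by simp
qed

lemma power_sum_atMost_le_fps_power:
  fixes B :: "'a::linordered_semidom fps"
  assumes nonneg: "\<And>n. B $ n \<ge> 0"
  shows "(\<Sum>n\<le>M. B $ n) ^ k \<le> (\<Sum>n\<le>k * M. (B ^ k) $ n)"
proof (induction k)
  case 0
  then show ?case by simp
next
  case (Suc k)
  have "(\<Sum>n\<le>M. B $ n) ^ Suc k \<le> (\<Sum>i\<le>M. B $ i) * (\<Sum>j\<le>k * M. (B ^ k) $ j)"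
    by (simp, rule mult_left_mono[OF Suc]) (auto intro: sum_nonneg nonneg)
  also have "\<dots> = (\<Sum>(i, j)\<in>{..M} \<times> {..k * M}. B $ i * (B ^ k) $ j)"
    by (simp add: sum_product sum.cartesian_product)
  also have "\<dots> \<le> (\<Sum>(i, j)\<in>{(i, j). i + j \<le> Suc k * M}. B $ i * (B ^ k) $ j)"
  proof (rule sum_mono2)
    show "finite {(i, j). i + j \<le> Suc k * M}"
      by (rule finite_subset[of _ "{..Suc k * M} \<times> {..Suc k * M}"]) auto
  qed (auto intro!: mult_nonneg_nonneg nonneg fps_power_nth_nonneg)
  also have "\<dots> = (\<Sum>n\<le>Suc k * M. (B ^ Suc k) $ n)"
    by (simp add: sum_atMost_fps_mult_nth)
  finally show ?case .
qed

lemma fps_exp_compose_nth: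
  "(fps_exp 1 oo B) $ n = (\<Sum>i\<le>n. (B ^ i) $ n / fact i)"
  for B :: "'a::field_char_0 fps"
  by (simp add: fps_compose_nth atLeast0AtMost)

text \<open>Coefficientwise, the derivative rule \<open>(exp B)' = exp B \<cdot> B'\<close>.\<close>

lemma fps_exp_compose_nth_Suc:
  fixes B :: "'a::field_char_0 fps"
  assumes "B $ 0 = 0"
  shows "of_nat (Suc n) * (fps_exp 1 oo B) $ Suc n =
    (\<Sum>j\<le>n. of_nat (Suc j) * B $ Suc j * (fps_exp 1 oo B) $ (n - j))"
proof -
  let ?E = "fps_exp 1 oo B"
  have "fps_deriv ?E = ?E * fps_deriv B"
    using fps_compose_deriv[OF assms, of "fps_exp 1"] by simp
  then have "fps_deriv ?E $ n = (?E * fps_deriv B) $ n"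
    by simp
  then have "of_nat (Suc n) * ?E $ Suc n = (\<Sum>i=0..n. ?E $ i * (of_nat (Suc (n - i)) * B $ Suc (n - i)))"
    by (simp add: fps_mult_nth)
  also have "\<dots> = (\<Sum>j\<le>n. of_nat (Suc j) * B $ Suc j * ?E $ (n - j))"
    by (rule sum.reindex_bij_witness[where i="\<lambda>j. n - j" and j="\<lambda>i. n - i"]) auto
  finally show ?thesis .
qed

lemma fps_exp_compose_nth_if_recursion:
  fixes a :: "nat \<Rightarrow> 'a::field_char_0" and B :: "'a fps"
  assumes B0: "B $ 0 = 0" and a0: "a 0 = 1"
    and rec: "\<And>n. Suc n \<le> N \<Longrightarrow>
      of_nat (Suc n) * a (Suc n) = (\<Sum>j\<le>n. of_nat (Suc j) * B $ Suc j * a (n - j))"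
    and "n \<le> N"
  shows "a n = (fps_exp 1 oo B) $ n"
  using \<open>n \<le> N\<close>
proof (induction n rule: less_induct)
  case (less n)
  show ?case
  proof (cases n)
    case 0
    then show ?thesis by (simp add: a0)
  next
    case (Suc m)
    have "of_nat (Suc m) * a (Suc m) = (\<Sum>j\<le>m. of_nat (Suc j) * B $ Suc j * a (m - j))"
      using rec less.prems Suc by blast
    also have "\<dots> = (\<Sum>j\<le>m. of_nat (Suc j) * B $ Suc j * (fps_exp 1 oo B) $ (m - j))"
      using less Suc by (intro sum.cong refl) auto
    also have "\<dots> = of_nat (Suc m) * (fps_exp 1 oo B) $ Suc m"
      by (rule fps_exp_compose_nth_Suc[OF B0, symmetric])
    finally show ?thesis
      using Suc by (simp del: of_nat_Suc)
  qed
qed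

lemma sum_atMost_power_div_fact_le_exp:
  fixes x :: real
  assumes "x \<ge> 0"
  shows "(\<Sum>i\<le>N. x ^ i / fact i) \<le> exp x"
proof -
  have sums: "(\<lambda>i. x ^ i / fact i) sums exp x"
    using exp_converges[of x] by (simp add: divide_inverse mult.commute)
  have "(\<Sum>i<Suc N. x ^ i / fact i) \<le> (\<Sum>i. x ^ i / fact i)"
    using assms by (intro sum_le_suminf sums_summable[OF sums]) auto
  then show ?thesis
    by (simp add: lessThan_Suc_atMost sums_unique[OF sums, symmetric])
qed

lemma sum_atMost_fps_exp_compose_le:
  fixes B :: "real fps"
  assumes nonneg: "\<And>n. B $ n \<ge> 0"
  shows "(\<Sum>n\<le>N. (fps_exp 1 oo B) $ n) \<le> exp (\<Sum>n\<le>N. B $ n)"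
proof -
  have "(\<Sum>n\<le>N. (fps_exp 1 oo B) $ n) = (\<Sum>n\<le>N. \<Sum>i\<le>n. (B ^ i) $ n / fact i)"
    by (simp add: fps_exp_compose_nth)
  also have "\<dots> \<le> (\<Sum>n\<le>N. \<Sum>i\<le>N. (B ^ i) $ n / fact i)"
    by (intro sum_mono sum_mono2) (auto intro!: divide_nonneg_pos fps_power_nth_nonneg nonneg)
  also have "\<dots> = (\<Sum>i\<le>N. (\<Sum>n\<le>N. (B ^ i) $ n) / fact i)"
    by (subst sum.swap) (simp add: sum_divide_distrib)
  also have "\<dots> \<le> (\<Sum>i\<le>N. (\<Sum>n\<le>N. B $ n) ^ i / fact i)"
    by (intro sum_mono divide_right_mono sum_atMost_fps_power_le nonneg) auto
  also have "\<dots> \<le> exp (\<Sum>n\<le>N. B $ n)"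
    by (rule sum_atMost_power_div_fact_le_exp) (auto intro: sum_nonneg nonneg)
  finally show ?thesis .
qed

lemma exp_sum_atMost_le_suminf_fps_exp_compose:
  fixes B :: "real fps"
  assumes B0: "B $ 0 = 0" and nonneg: "\<And>n. B $ n \<ge> 0"
    and summable: "summable (\<lambda>n. (fps_exp 1 oo B) $ n)"
  shows "exp (\<Sum>n\<le>K. B $ n) \<le> (\<Sum>n. (fps_exp 1 oo B) $ n)"
proof -
  let ?s = "\<Sum>n\<le>K. B $ n"
  have "(\<Sum>i<L. ?s ^ i / fact i) \<le> (\<Sum>n. (fps_exp 1 oo B) $ n)" for L
  proof -
    have "(\<Sum>i<L. ?s ^ i / fact i) \<le> (\<Sum>i\<le>L. ?s ^ i / fact i)"
      by (rule sum_mono2) (auto intro!: divide_nonneg_pos zero_le_power sum_nonneg nonneg)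
    also have "\<dots> \<le> (\<Sum>i\<le>L. (\<Sum>n\<le>i * K. (B ^ i) $ n) / fact i)"
      by (intro sum_mono divide_right_mono power_sum_atMost_le_fps_power nonneg) auto
    also have "\<dots> \<le> (\<Sum>i\<le>L. (\<Sum>n\<le>L * K. (B ^ i) $ n) / fact i)"
      by (intro sum_mono divide_right_mono sum_mono2) (auto intro: fps_power_nth_nonneg nonneg)
    also have "\<dots> = (\<Sum>n\<le>L * K. \<Sum>i\<le>L. (B ^ i) $ n / fact i)"
      by (subst sum.swap) (simp add: sum_divide_distrib)
    also have "\<dots> \<le> (\<Sum>n\<le>L * K. (fps_exp 1 oo B) $ n)"
    proof (rule sum_mono)
      fix n
      have "(\<Sum>i\<le>L. (B ^ i) $ n / fact i) \<le> (\<Sum>i\<le>max L n. (B ^ i) $ n / fact i)"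
        by (rule sum_mono2) (auto intro!: divide_nonneg_pos fps_power_nth_nonneg nonneg)
      also have "\<dots> = (\<Sum>i\<le>n. (B ^ i) $ n / fact i)"
        using startsby_zero_power_prefix[OF B0]
        by (intro sum.mono_neutral_right) auto
      finally show "(\<Sum>i\<le>L. (B ^ i) $ n / fact i) \<le> (fps_exp 1 oo B) $ n"
        by (simp add: fps_exp_compose_nth)
    qed
    also have "\<dots> \<le> (\<Sum>n. (fps_exp 1 oo B) $ n)"
      by (intro sum_le_suminf summable)
        (auto simp: fps_exp_compose_nth intro!: sum_nonneg divide_nonneg_pos fps_power_nth_nonneg nonneg)
    finally show ?thesis .
  qed
  moreover have "(\<lambda>i. ?s ^ i / fact i) sums exp ?s"
    using exp_converges[of ?s] by (simp add: divide_inverse mult.commute)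
  ultimately show ?thesis
    by (metis sums_unique sums_summable suminf_le_const)
qed

lemma sum_atMost_fps_X_mult_nth: "(\<Sum>n\<le>N. (fps_X * f) $ n) = (\<Sum>j<N. f $ j)"
  for f :: "'a::comm_ring_1 fps"
  by (induction N) auto

lemma ennreal_inverse_fact_mult:
  assumes "x < \<infinity>"
  shows "ennreal (1 / fact n) * x = ennreal (enn2real x / fact n)"
proof -
  have "ennreal (1 / fact n) * x = ennreal (1 / fact n) * ennreal (enn2real x)"
    using assms by simp
  also have "\<dots> = ennreal (enn2real x / fact n)"
    by (subst ennreal_mult[symmetric]) auto
  finally show ?thesis .
qed

text \<open>For \<open>a\<^sub>n = G n / n!\<close> and \<open>b\<^sub>j = g j / j!\<close> the binomial recursion reads
  \<open>(n + 1) a\<^sub>n\<^sub>+\<^sub>1 = (\<Sum>j\<le>n. (j + 1) b\<^sub>j a\<^sub>n\<^sub>-\<^sub>j)\<close>, i.e. \<open>A' = A B'\<close> for \<open>A = \<Sum> a\<^sub>n t\<^sup>n\<close> and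
  \<open>B = \<Sum> b\<^sub>j t\<^sup>j\<^sup>+\<^sup>1\<close>, so that \<open>A = exp B\<close> as long as the terms are finite.\<close>

lemma binomial_recursion_finite:
  fixes G g :: "nat \<Rightarrow> ennreal"
  assumes G0: "G 0 = 1"
    and rec: "\<And>n. Suc n \<le> N \<Longrightarrow>
      G (Suc n) = (\<Sum>j\<le>n. of_nat (n choose j) * of_nat (Suc j) * g j * G (n - j))"
    and g_fin: "\<And>j. j < N \<Longrightarrow> g j < \<infinity>"
    and "n \<le> N"
  shows "G n < \<infinity>"
  using \<open>n \<le> N\<close>
proof (induction n rule: less_induct)
  case (less n)
  show ?case
  proof (cases n)
    case 0
    then show ?thesis by (simp add: G0)
  next
    case (Suc m)
    have "of_nat (m choose j) * of_nat (Suc j) * g j * G (m - j) < \<infinity>" if "j \<le> m" for j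
      using g_fin[of j] less.IH[of "m - j"] less.prems Suc that
      by (simp add: ennreal_mult_less_top of_nat_less_top)
    then show ?thesis
      using rec[of m] less.prems Suc by simp
  qed
qed

lemma binomial_recursion_real:
  fixes G g :: "nat \<Rightarrow> ennreal"
  assumes rec: "G (Suc n) = (\<Sum>j\<le>n. of_nat (n choose j) * of_nat (Suc j) * g j * G (n - j))"
    and g_fin: "\<And>j. j \<le> n \<Longrightarrow> g j < \<infinity>" and G_fin: "\<And>j. j \<le> n \<Longrightarrow> G j < \<infinity>"
  shows "of_nat (Suc n) * (enn2real (G (Suc n)) / fact (Suc n)) =
    (\<Sum>j\<le>n. of_nat (Suc j) * (enn2real (g j) / fact j) * (enn2real (G (n - j)) / fact (n - j)))"
proof -
  have "enn2real (G (Suc n)) =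
      (\<Sum>j\<le>n. enn2real (of_nat (n choose j) * of_nat (Suc j) * g j * G (n - j)))"
    unfolding rec using g_fin G_fin
    by (subst enn2real_sum) (auto simp: ennreal_mult_less_top of_nat_less_top)
  also have "\<dots> = (\<Sum>j\<le>n. of_nat (n choose j) * of_nat (Suc j) * enn2real (g j) * enn2real (G (n - j)))"
    by (simp add: enn2real_mult del: of_nat_Suc)
  moreover have "of_nat (Suc n) * (enn2real (G (Suc n)) / fact (Suc n)) = enn2real (G (Suc n)) / fact n"
    by (simp del: of_nat_Suc)
  ultimately have "of_nat (Suc n) * (enn2real (G (Suc n)) / fact (Suc n)) =
      (\<Sum>j\<le>n. of_nat (n choose j) * of_nat (Suc j) * enn2real (g j) * enn2real (G (n - j)) / fact n)"
    by (simp add: sum_divide_distrib)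
  also have "\<dots> = (\<Sum>j\<le>n. of_nat (Suc j) * (enn2real (g j) / fact j) * (enn2real (G (n - j)) / fact (n - j)))"
  proof (intro sum.cong refl)
    fix j assume "j \<in> {..n}"
    then have "real (n choose j) = fact n / (fact j * fact (n - j))"
      by (simp add: binomial_fact)
    then show "of_nat (n choose j) * of_nat (Suc j) * enn2real (g j) * enn2real (G (n - j)) / fact n =
        of_nat (Suc j) * (enn2real (g j) / fact j) * (enn2real (G (n - j)) / fact (n - j))"
      by (simp only:) (simp add: field_simps)
  qed
  finally show ?thesis .
qed

lemma binomial_recursion_fps_exp_compose:
  fixes G g :: "nat \<Rightarrow> ennreal"
  assumes G0: "G 0 = 1"
    and rec: "\<And>n. Suc n \<le> N \<Longrightarrow>
      G (Suc n) = (\<Sum>j\<le>n. of_nat (n choose j) * of_nat (Suc j) * g j * G (n - j))"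
    and g_fin: "\<And>j. j < N \<Longrightarrow> g j < \<infinity>"
    and "n \<le> N"
  shows "enn2real (G n) / fact n = (fps_exp 1 oo fps_X * Abs_fps (\<lambda>j. enn2real (g j) / fact j)) $ n"
proof (rule fps_exp_compose_nth_if_recursion[where N = N])
  fix m assume m: "Suc m \<le> N"
  have "G j < \<infinity>" if "j \<le> m" for j
    using binomial_recursion_finite[OF G0 rec g_fin] that m by simp
  then show "of_nat (Suc m) * (enn2real (G (Suc m)) / fact (Suc m)) =
      (\<Sum>j\<le>m. of_nat (Suc j) * (fps_X * Abs_fps (\<lambda>j. enn2real (g j) / fact j)) $ Suc j *
        (enn2real (G (m - j)) / fact (m - j)))"
    using binomial_recursion_real[OF rec[OF m]] g_fin m by simp
qed (use G0 \<open>n \<le> N\<close> in simp_all)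

lemma binomial_recursion_partial_sum_le_exp:
  fixes G g :: "nat \<Rightarrow> ennreal"
  assumes G0: "G 0 = 1"
    and rec: "\<And>n. Suc n \<le> N \<Longrightarrow>
      G (Suc n) = (\<Sum>j\<le>n. of_nat (n choose j) * of_nat (Suc j) * g j * G (n - j))"
    and s: "0 \<le> s" and g_le: "(\<Sum>j<N. ennreal (1 / fact j) * g j) \<le> ennreal s"
  shows "(\<Sum>n\<le>N. ennreal (1 / fact n) * G n) \<le> ennreal (exp s)"
proof -
  let ?b = "\<lambda>j. enn2real (g j) / fact j"
  let ?B = "fps_X * Abs_fps ?b"
  have g_fin: "g j < \<infinity>" if "j < N" for j
  proof -
    have "ennreal (1 / fact j) * g j \<le> (\<Sum>j<N. ennreal (1 / fact j) * g j)"
      using that by (intro member_le_sum) auto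
    also have "\<dots> < \<infinity>"
      using g_le by (simp add: le_less_trans)
    finally show ?thesis
      by (auto simp: ennreal_mult_less_top)
  qed
  have "(\<Sum>n\<le>N. ennreal (1 / fact n) * G n) = ennreal (\<Sum>n\<le>N. enn2real (G n) / fact n)"
    using binomial_recursion_finite[OF G0 rec g_fin]
    by (simp add: ennreal_inverse_fact_mult)
  also have "\<dots> = ennreal (\<Sum>n\<le>N. (fps_exp 1 oo ?B) $ n)"
    using binomial_recursion_fps_exp_compose[OF G0 rec g_fin] by simp
  also have "\<dots> \<le> ennreal (exp (\<Sum>n\<le>N. ?B $ n))"
    by (intro ennreal_leI sum_atMost_fps_exp_compose_le) simp
  also have "(\<Sum>n\<le>N. ?B $ n) = (\<Sum>j<N. ?b j)"
    by (subst sum_atMost_fps_X_mult_nth) simp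
  also have "(\<Sum>j<N. ?b j) \<le> s"
  proof -
    have "ennreal (\<Sum>j<N. ?b j) = (\<Sum>j<N. ennreal (1 / fact j) * g j)"
      using g_fin by (simp add: ennreal_inverse_fact_mult)
    with g_le have "ennreal (\<Sum>j<N. ?b j) \<le> ennreal s"
      by simp
    then show ?thesis
      using ennreal_le_iff[OF s] by blast
  qed
  finally show ?thesis
    by (simp add: ennreal_leI)
qed

lemma binomial_recursion_le:
  fixes G g :: "nat \<Rightarrow> ennreal"
  assumes G0: "G 0 = 1"
    and rec: "G (Suc n) = (\<Sum>j\<le>n. of_nat (n choose j) * of_nat (Suc j) * g j * G (n - j))"
  shows "g n \<le> G (Suc n)"
proof -
  have "g n \<le> of_nat (Suc n) * g n"
    by (rule order_trans[OF _ mult_right_mono[of 1]]) auto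
  also have "\<dots> = of_nat (n choose n) * of_nat (Suc n) * g n * G (n - n)"
    by (simp add: G0)
  also have "\<dots> \<le> G (Suc n)"
    unfolding rec by (rule member_le_sum) auto
  finally show ?thesis .
qed

lemma binomial_recursion_suminf_le_ln:
  fixes G g :: "nat \<Rightarrow> ennreal"
  assumes G0: "G 0 = 1"
    and rec: "\<And>n. G (Suc n) = (\<Sum>j\<le>n. of_nat (n choose j) * of_nat (Suc j) * g j * G (n - j))"
    and fin: "(\<Sum>n. ennreal (1 / fact n) * G n) < \<infinity>"
  shows "(\<Sum>j. ennreal (1 / fact j) * g j) \<le> ennreal (ln (enn2real (\<Sum>n. ennreal (1 / fact n) * G n)))"
proof -
  let ?T = "\<Sum>n. ennreal (1 / fact n) * G n"
  let ?a = "\<lambda>n. enn2real (G n) / fact n"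
  let ?b = "\<lambda>j. enn2real (g j) / fact j"
  let ?B = "fps_X * Abs_fps ?b"
  have G_fin: "G n < \<infinity>" for n
    using ennreal_suminf_lessD[OF fin, of n] by (auto simp: ennreal_mult_less_top)
  have g_fin: "g n < \<infinity>" for n
    using binomial_recursion_le[OF G0 rec] G_fin[of "Suc n"] by (rule le_less_trans)
  have a_eq: "?a n = (fps_exp 1 oo ?B) $ n" for n
    using binomial_recursion_fps_exp_compose[OF G0 rec g_fin order.refl] .
  have T_eq: "?T = (\<Sum>n. ennreal (?a n))"
    using G_fin by (simp add: ennreal_inverse_fact_mult)
  then have summable: "summable ?a"
    using fin by (intro summable_suminf_not_top) auto
  then have T_real: "enn2real ?T = (\<Sum>n. ?a n)"
    unfolding T_eq by (simp add: suminf_ennreal2 suminf_nonneg)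
  have bound: "(\<Sum>j<K. ?b j) \<le> ln (enn2real ?T)" for K
  proof -
    have "exp (\<Sum>n\<le>K. ?B $ n) \<le> (\<Sum>n. (fps_exp 1 oo ?B) $ n)"
      using summable a_eq by (intro exp_sum_atMost_le_suminf_fps_exp_compose) simp_all
    moreover have "(\<Sum>n\<le>K. ?B $ n) = (\<Sum>j<K. ?b j)"
      by (subst sum_atMost_fps_X_mult_nth) simp
    moreover have "(\<Sum>n. (fps_exp 1 oo ?B) $ n) = enn2real ?T"
      using T_real a_eq by simp
    ultimately have "exp (\<Sum>j<K. ?b j) \<le> enn2real ?T"
      by simp
    then show ?thesis
      by (metis exp_gt_zero less_le_trans ln_ge_iff)
  qed
  show ?thesis
  proof (rule suminf_le_const[OF summableI])
    fix K
    have "(\<Sum>j<K. ennreal (1 / fact j) * g j) = ennreal (\<Sum>j<K. ?b j)"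
      using g_fin by (simp add: ennreal_inverse_fact_mult)
    also have "\<dots> \<le> ennreal (ln (enn2real ?T))"
      using bound by (rule ennreal_leI)
    finally show "(\<Sum>j<K. ennreal (1 / fact j) * g j) \<le> ennreal (ln (enn2real ?T))" .
  qed
qed

section \<open>Labelled trees\<close>

definition complete_edges :: "nat set \<Rightarrow> nat set set" where
  "complete_edges V = {e. \<exists>i j. e = {i, j} \<and> i \<noteq> j \<and> i \<in> V \<and> j \<in> V}"

definition adj :: "nat set set \<Rightarrow> (nat \<times> nat) set" where
  "adj E = {(a, b). {a, b} \<in> E}"

lemma is_tree_iff:
  "is_tree V E \<longleftrightarrow>
     E \<subseteq> complete_edges V \<and> card E + 1 = card V \<and> (\<forall>i\<in>V. \<forall>j\<in>V. (i, j) \<in> (adj E)\<^sup>*)"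
  unfolding is_tree_def complete_edges_def adj_def by simp

lemma adj_iff [simp]: "(a, b) \<in> adj E \<longleftrightarrow> {a, b} \<in> E"
  by (simp add: adj_def)

lemma adj_rtrancl_sym:
  assumes "(a, b) \<in> (adj E)\<^sup>*"
  shows "(b, a) \<in> (adj E)\<^sup>*"
proof -
  have "sym (adj E)"
    by (auto simp: sym_def insert_commute)
  then show ?thesis
    using assms sym_rtrancl by (blast dest: symD)
qed

lemma adj_rtrancl_mono: "E \<subseteq> E' \<Longrightarrow> (a, b) \<in> (adj E)\<^sup>* \<Longrightarrow> (a, b) \<in> (adj E')\<^sup>*"
  by (rule rtrancl_mono[THEN subsetD, of "adj E"]) (auto simp: adj_def)

lemma connected_if_connected_to:
  assumes "\<And>v. v \<in> V \<Longrightarrow> (v, r) \<in> (adj E)\<^sup>*"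
  shows "\<forall>i\<in>V. \<forall>j\<in>V. (i, j) \<in> (adj E)\<^sup>*"
  using assms adj_rtrancl_sym rtrancl_trans by metis

lemma complete_edgesI: "i \<noteq> j \<Longrightarrow> i \<in> V \<Longrightarrow> j \<in> V \<Longrightarrow> {i, j} \<in> complete_edges V"
  unfolding complete_edges_def by blast

lemma complete_edgesE:
  assumes "e \<in> complete_edges V"
  obtains i j where "e = {i, j}" "i \<noteq> j" "i \<in> V" "j \<in> V"
  using assms by (auto simp: complete_edges_def)

lemma complete_edges_subset: "e \<in> complete_edges V \<Longrightarrow> e \<subseteq> V"
  by (auto simp: complete_edges_def)

lemma complete_edges_mono: "V \<subseteq> W \<Longrightarrow> complete_edges V \<subseteq> complete_edges W"
  by (auto simp: complete_edges_def)

lemma complete_edges_restrict: "e \<in> complete_edges V \<Longrightarrow> e \<subseteq> W \<Longrightarrow> e \<in> complete_edges W"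
  by (auto simp: complete_edges_def)

lemma finite_complete_edges: "finite V \<Longrightarrow> finite (complete_edges V)"
  by (rule finite_subset[of _ "Pow V"]) (auto simp: complete_edges_def)

lemma finite_trees: "finite V \<Longrightarrow> finite {E. is_tree V E}"
  by (rule finite_subset[of _ "Pow (complete_edges V)"]) (auto simp: is_tree_iff finite_complete_edges)

lemma finite_tree_edges: "finite V \<Longrightarrow> is_tree V E \<Longrightarrow> finite E"
  by (auto simp: is_tree_iff intro: finite_subset[OF _ finite_complete_edges])

lemma tree_edgeE:
  assumes "is_tree V E" "e \<in> E"
  obtains i j where "e = {i, j}" "i \<noteq> j" "i \<in> V" "j \<in> V"
  using assms by (auto simp: is_tree_iff elim!: complete_edgesE)

lemma tree_edge_subset:
  assumes "is_tree V E" "e \<in> E"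
  shows "e \<subseteq> V"
  using assms complete_edges_subset unfolding is_tree_iff by blast

lemma tree_edge_nonempty:
  assumes "is_tree V E" "e \<in> E"
  shows "e \<noteq> {}"
  by (rule tree_edgeE[OF assms]) simp

text \<open>Every vertex other than \<open>r\<close> is matched injectively with the first edge of a shortest path to \<open>r\<close>.\<close>

lemma card_le_Suc_card_if_connected:
  assumes V: "finite V" and E: "finite E" and conn: "\<forall>i\<in>V. \<forall>j\<in>V. (i, j) \<in> (adj E)\<^sup>*"
  shows "card V \<le> card E + 1"
proof (cases "V = {}")
  case False
  then obtain r where r: "r \<in> V"
    by blast
  let ?R = "adj E"
  define d where "d v = (LEAST k. (v, r) \<in> ?R ^^ k)" for v
  have dR: "(v, r) \<in> ?R ^^ d v" if "v \<in> V" for v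
    unfolding d_def by (rule LeastI_ex) (use conn r that rtrancl_power in blast)
  have d_le: "d v \<le> k" if "(v, r) \<in> ?R ^^ k" for v k
    unfolding d_def using that by (rule Least_le)
  have d_pos: "d v > 0" if "v \<in> V" "v \<noteq> r" for v
    using dR[OF that(1)] that(2) by (cases "d v") auto
  define next_hop where "next_hop v = (SOME w. (v, w) \<in> ?R \<and> (w, r) \<in> ?R ^^ (d v - 1))" for v
  have next_hop: "(v, next_hop v) \<in> ?R \<and> (next_hop v, r) \<in> ?R ^^ (d v - 1)"
    if "v \<in> V" "v \<noteq> r" for v
  proof -
    have "(v, r) \<in> ?R ^^ Suc (d v - 1)"
      using dR[OF that(1)] d_pos[OF that] by simp
    then show ?thesis
      unfolding next_hop_def by (rule someI_ex[OF relpow_Suc_D2])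
  qed
  have "inj_on (\<lambda>v. {v, next_hop v}) (V - {r})"
  proof (rule inj_onI)
    fix v v' assume v: "v \<in> V - {r}" and v': "v' \<in> V - {r}"
      and eq: "{v, next_hop v} = {v', next_hop v'}"
    show "v = v'"
    proof (rule ccontr)
      assume "v \<noteq> v'"
      with eq have "v = next_hop v'" "v' = next_hop v"
        by (auto simp: doubleton_eq_iff)
      then have "d v \<le> d v' - 1" "d v' \<le> d v - 1"
        using next_hop[of v'] next_hop[of v] v v' d_le by auto
      then show False
        using d_pos[of v] d_pos[of v'] v v' by auto
    qed
  qed
  moreover have "(\<lambda>v. {v, next_hop v}) ` (V - {r}) \<subseteq> E"
    using next_hop by auto
  ultimately have "card (V - {r}) \<le> card E"
    using card_inj_on_le[OF _ _ E] by blast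
  then show ?thesis
    using r V by auto
qed simp

lemma tree_edges_disjoint:
  assumes "is_tree V1 E1" "is_tree V2 E2" "V1 \<inter> V2 = {}"
  shows "E1 \<inter> E2 = {}"
proof (intro equalityI subsetI)
  fix e assume e: "e \<in> E1 \<inter> E2"
  then have "e \<subseteq> V1 \<inter> V2"
    using tree_edge_subset[OF assms(1)] tree_edge_subset[OF assms(2)] by simp
  moreover have "e \<noteq> {}"
    using e tree_edge_nonempty[OF assms(1)] by simp
  ultimately show "e \<in> {}"
    using assms(3) by simp
qed simp

lemma is_tree_glue:
  assumes fin: "finite V1" "finite V2" and disj: "V1 \<inter> V2 = {}"
    and T1: "is_tree V1 E1" and T2: "is_tree V2 E2" and u: "u \<in> V1" and w: "w \<in> V2"
  shows "is_tree (V1 \<union> V2) (insert {u, w} (E1 \<union> E2))"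
proof -
  let ?E = "insert {u, w} (E1 \<union> E2)"
  have "{u, w} \<notin> E1" "{u, w} \<notin> E2"
    using tree_edge_subset[OF T1, of "{u, w}"] tree_edge_subset[OF T2, of "{u, w}"] u w disj by auto
  then have "card ?E = Suc (card E1 + card E2)"
    using tree_edges_disjoint[OF T1 T2 disj] finite_tree_edges fin T1 T2
    by (simp add: card_Un_disjoint)
  then have card: "card ?E + 1 = card (V1 \<union> V2)"
    using T1 T2 fin disj by (simp add: is_tree_iff card_Un_disjoint)
  have "E1 \<union> E2 \<subseteq> complete_edges (V1 \<union> V2)"
    using T1 T2 complete_edges_mono[of V1 "V1 \<union> V2"] complete_edges_mono[of V2 "V1 \<union> V2"]
    by (auto simp: is_tree_iff)
  moreover have "{u, w} \<in> complete_edges (V1 \<union> V2)"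
    using u w disj by (intro complete_edgesI) auto
  ultimately have edges: "?E \<subseteq> complete_edges (V1 \<union> V2)"
    by blast
  have "(v, u) \<in> (adj ?E)\<^sup>*" if "v \<in> V1 \<union> V2" for v
  proof (cases "v \<in> V1")
    case True
    then have "(v, u) \<in> (adj E1)\<^sup>*"
      using T1 u by (simp add: is_tree_iff)
    then show ?thesis
      by (rule adj_rtrancl_mono[rotated]) auto
  next
    case False
    then have "(v, w) \<in> (adj E2)\<^sup>*"
      using T2 w that by (simp add: is_tree_iff)
    then have "(v, w) \<in> (adj ?E)\<^sup>*"
      by (rule adj_rtrancl_mono[rotated]) auto
    moreover have "(w, u) \<in> adj ?E"
      by (simp add: insert_commute)
    ultimately show ?thesis
      by (rule rtrancl_into_rtrancl)
  qed
  then have "\<forall>i\<in>V1 \<union> V2. \<forall>j\<in>V1 \<union> V2. (i, j) \<in> (adj ?E)\<^sup>*"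
    by (rule connected_if_connected_to)
  with edges card show ?thesis
    by (simp add: is_tree_iff)
qed

lemma adj_rtrancl_exit:
  assumes "(a, b) \<in> (adj E)\<^sup>*" "a \<in> V" "b \<notin> V"
  obtains x y where "x \<in> V" "y \<notin> V" "{x, y} \<in> E"
  using assms by (induction rule: rtrancl_induct) auto

lemma card_edges_partition:
  assumes "finite E" "\<And>e. e \<in> E \<Longrightarrow> e \<noteq> {}" "V1 \<inter> V2 = {}"
  shows "card E = card {e\<in>E. e \<subseteq> V1} + card {e\<in>E. e \<subseteq> V2} + card {e\<in>E. \<not> e \<subseteq> V1 \<and> \<not> e \<subseteq> V2}"
proof -
  have "card ({e\<in>E. e \<subseteq> V1} \<union> {e\<in>E. e \<subseteq> V2}) = card {e\<in>E. e \<subseteq> V1} + card {e\<in>E. e \<subseteq> V2}"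
    using assms by (intro card_Un_disjoint) auto
  moreover have "E = ({e\<in>E. e \<subseteq> V1} \<union> {e\<in>E. e \<subseteq> V2}) \<union> {e\<in>E. \<not> e \<subseteq> V1 \<and> \<not> e \<subseteq> V2}"
    by auto
  then have "card E = card ({e\<in>E. e \<subseteq> V1} \<union> {e\<in>E. e \<subseteq> V2}) + card {e\<in>E. \<not> e \<subseteq> V1 \<and> \<not> e \<subseteq> V2}"
    using assms(1) by (subst card_Un_disjoint[symmetric]) auto
  ultimately show ?thesis
    by simp
qed

text \<open>Some edge joins the two parts, and counting edges leaves room for only one.\<close>

lemma is_tree_partition:
  assumes T: "is_tree V E" and fin: "finite V"
    and V: "V = V1 \<union> V2" "V1 \<inter> V2 = {}" "V1 \<noteq> {}" "V2 \<noteq> {}"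
    and conn1: "\<forall>i\<in>V1. \<forall>j\<in>V1. (i, j) \<in> (adj {e\<in>E. e \<subseteq> V1})\<^sup>*"
    and conn2: "\<forall>i\<in>V2. \<forall>j\<in>V2. (i, j) \<in> (adj {e\<in>E. e \<subseteq> V2})\<^sup>*"
  shows "is_tree V1 {e\<in>E. e \<subseteq> V1}" "is_tree V2 {e\<in>E. e \<subseteq> V2}"
    and "card {e\<in>E. \<not> e \<subseteq> V1 \<and> \<not> e \<subseteq> V2} = 1"
proof -
  let ?E1 = "{e\<in>E. e \<subseteq> V1}" and ?E2 = "{e\<in>E. e \<subseteq> V2}"
  let ?X = "{e\<in>E. \<not> e \<subseteq> V1 \<and> \<not> e \<subseteq> V2}"
  have finE: "finite E"
    using finite_tree_edges[OF fin T] .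
  have card_E: "card E = card ?E1 + card ?E2 + card ?X"
    using finE tree_edge_nonempty[OF T] V(2) by (rule card_edges_partition)
  have "card V1 \<le> card ?E1 + 1" "card V2 \<le> card ?E2 + 1"
    using card_le_Suc_card_if_connected[of V1 ?E1] card_le_Suc_card_if_connected[of V2 ?E2]
      fin V(1) finE conn1 conn2 by auto
  moreover have "?X \<noteq> {}"
  proof -
    obtain r1 r2 where r: "r1 \<in> V1" "r2 \<in> V2"
      using V(3,4) by blast
    then have "(r1, r2) \<in> (adj E)\<^sup>*"
      using T V(1) by (simp add: is_tree_iff)
    then obtain x y where "x \<in> V1" "y \<notin> V1" "{x, y} \<in> E"
      using r V(2) by (elim adj_rtrancl_exit) auto
    then have "{x, y} \<in> ?X"
      using V(2) by auto
    then show ?thesis by blast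
  qed
  then have "card ?X \<ge> 1"
    using finE by (simp add: Suc_le_eq card_gt_0_iff)
  moreover have "card E + 1 = card V1 + card V2"
    using T fin V(1,2) by (simp add: is_tree_iff card_Un_disjoint)
  ultimately have "card ?X = 1" "card ?E1 + 1 = card V1" "card ?E2 + 1 = card V2"
    using card_E by linarith+
  moreover have "?E1 \<subseteq> complete_edges V1" "?E2 \<subseteq> complete_edges V2"
    using T by (auto simp: is_tree_iff intro: complete_edges_restrict)
  ultimately show "is_tree V1 ?E1" "is_tree V2 ?E2" "card ?X = 1"
    using conn1 conn2 by (simp_all add: is_tree_iff)
qed

definition branch :: "nat set set \<Rightarrow> nat \<Rightarrow> nat \<Rightarrow> nat set" where
  "branch E r p = {v. (p, v) \<in> (adj {e\<in>E. r \<notin> e})\<^sup>*}"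

lemma branch_closed:
  assumes "v \<in> branch E r p" "{v, w} \<in> E" "r \<noteq> v" "r \<noteq> w"
  shows "w \<in> branch E r p"
proof -
  have "(p, v) \<in> (adj {e\<in>E. r \<notin> e})\<^sup>*" "(v, w) \<in> adj {e\<in>E. r \<notin> e}"
    using assms by (simp_all add: branch_def)
  then have "(p, w) \<in> (adj {e\<in>E. r \<notin> e})\<^sup>*"
    by (rule rtrancl_into_rtrancl)
  then show ?thesis
    by (simp add: branch_def)
qed

lemma branch_subset:
  assumes T: "is_tree (insert r S) E" and "r \<notin> S" "p \<in> S"
  shows "branch E r p \<subseteq> S"
proof
  fix v assume "v \<in> branch E r p"
  then have "(p, v) \<in> (adj {e\<in>E. r \<notin> e})\<^sup>*"
    by (simp add: branch_def)
  then show "v \<in> S"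
  proof (induction rule: rtrancl_induct)
    case base
    show ?case by fact
  next
    case (step y z)
    then show ?case
      using tree_edge_subset[OF T, of "{y, z}"] by auto
  qed
qed

lemma branch_connected:
  assumes "v \<in> branch E r p"
  shows "(v, p) \<in> (adj {e\<in>E. e \<subseteq> branch E r p})\<^sup>*"
proof -
  have "(p, v) \<in> (adj {e\<in>E. r \<notin> e})\<^sup>*"
    using assms by (simp add: branch_def)
  then have "(p, v) \<in> (adj {e\<in>E. e \<subseteq> branch E r p})\<^sup>*"
  proof (induction rule: rtrancl_induct)
    case base
    then show ?case by simp
  next
    case (step y z)
    have "y \<in> branch E r p" "z \<in> branch E r p"
      using step unfolding branch_def by (auto intro: rtrancl_into_rtrancl)
    then have "(y, z) \<in> adj {e\<in>E. e \<subseteq> branch E r p}"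
      using step by simp
    with step.IH show ?case
      by (rule rtrancl_into_rtrancl)
  qed
  then show ?thesis
    by (rule adj_rtrancl_sym)
qed

text \<open>A path from outside the branch to the root never enters the branch: its only edge
  leaving the branch ends at the root.\<close>

lemma connected_outside_branch:
  assumes T: "is_tree (insert r S) E" and S: "r \<notin> S" "p \<in> S"
    and w: "w \<in> insert r (S - branch E r p)"
  shows "(w, r) \<in> (adj {e\<in>E. e \<subseteq> insert r (S - branch E r p)})\<^sup>*"
proof -
  let ?B = "branch E r p"
  let ?R = "insert r (S - ?B)"
  have rB: "r \<notin> ?B"
    using branch_subset[OF T S] S(1) by blast
  have "(w, r) \<in> (adj E)\<^sup>*"
    using T w by (auto simp: is_tree_iff)
  then show ?thesis
    using w
  proof (induction rule: converse_rtrancl_induct)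
    case base
    then show ?case by simp
  next
    case (step y z)
    show ?case
    proof (cases "y = r")
      case True
      then show ?thesis by simp
    next
      case False
      with step.prems have y: "y \<in> S" "y \<notin> ?B"
        by auto
      have yz: "{y, z} \<in> E"
        using step by simp
      have "z \<notin> ?B"
      proof
        assume "z \<in> ?B"
        then have "y \<in> ?B"
          using branch_closed[of z E r p y] yz False rB by (auto simp: insert_commute)
        with y show False by simp
      qed
      then have z: "z \<in> ?R"
        using tree_edge_subset[OF T yz] by auto
      then have "(y, z) \<in> adj {e\<in>E. e \<subseteq> ?R}"
        using yz step.prems by simp
      then show ?thesis
        using step.IH[OF z] by (rule converse_rtrancl_into_rtrancl)
    qed
  qed
qed

lemma branch_split:
  assumes T: "is_tree (insert r S) E" and S: "finite S" "r \<notin> S" "p \<in> S"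
  defines "B \<equiv> branch E r p"
  obtains c where "B \<subseteq> S" "p \<in> B" "c \<in> B" "is_tree B {e\<in>E. e \<subseteq> B}"
    "is_tree (insert r (S - B)) {e\<in>E. e \<subseteq> insert r (S - B)}"
    "E = insert {r, c} ({e\<in>E. e \<subseteq> insert r (S - B)} \<union> {e\<in>E. e \<subseteq> B})"
proof -
  let ?R = "insert r (S - B)"
  have BS: "B \<subseteq> S" and pB: "p \<in> B"
    using branch_subset[OF T S(2,3)] by (simp_all add: B_def branch_def)
  have rB: "r \<notin> B"
    using BS S(2) by blast
  have V: "insert r S = B \<union> ?R" "B \<inter> ?R = {}" "B \<noteq> {}" "?R \<noteq> {}"
    using BS rB pB by auto
  have "\<forall>i\<in>B. \<forall>j\<in>B. (i, j) \<in> (adj {e\<in>E. e \<subseteq> B})\<^sup>*"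
    using branch_connected[of _ E r p] unfolding B_def by (rule connected_if_connected_to)
  moreover have "\<forall>i\<in>?R. \<forall>j\<in>?R. (i, j) \<in> (adj {e\<in>E. e \<subseteq> ?R})\<^sup>*"
    using connected_outside_branch[OF T S(2,3)] unfolding B_def by (rule connected_if_connected_to)
  moreover have "finite (insert r S)"
    using S(1) by simp
  ultimately have parts:
    "is_tree B {e\<in>E. e \<subseteq> B}" "is_tree ?R {e\<in>E. e \<subseteq> ?R}"
    "card {e\<in>E. \<not> e \<subseteq> B \<and> \<not> e \<subseteq> ?R} = 1"
    using is_tree_partition[OF T _ V] by blast+
  then obtain x where x: "{e\<in>E. \<not> e \<subseteq> B \<and> \<not> e \<subseteq> ?R} = {x}"
    using card_1_singletonE by blast
  then have x_in: "x \<in> E" "\<not> x \<subseteq> B" "\<not> x \<subseteq> ?R"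
    by blast+
  obtain i j where ij: "x = {i, j}" "i \<noteq> j" "i \<in> insert r S" "j \<in> insert r S"
    using x_in(1) by (rule tree_edgeE[OF T])
  have to_root: "w = r" if "v \<in> B" "w \<notin> B" "{v, w} \<in> E" for v w
    using branch_closed[of v E r p w] that rB unfolding B_def by blast
  have "i \<in> B \<or> j \<in> B" "\<not> (i \<in> B \<and> j \<in> B)"
    using x_in(2,3) ij by auto
  then have "(i \<in> B \<and> j = r) \<or> (j \<in> B \<and> i = r)"
    using to_root[of i j] to_root[of j i] x_in(1) ij(1) by (auto simp: insert_commute)
  then obtain c where c: "c \<in> B" "x = {r, c}"
    using ij(1) by (metis insert_commute)
  have "e = x" if "e \<in> E" "\<not> e \<subseteq> B" "\<not> e \<subseteq> ?R" for e
    using x that by blast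
  then have "E = insert x ({e\<in>E. e \<subseteq> ?R} \<union> {e\<in>E. e \<subseteq> B})"
    using x_in(1) by blast
  with that BS pB c parts show ?thesis
    by simp
qed

lemma glued_tree_parts:
  assumes disj: "V0 \<inter> B = {}" and r: "r \<in> V0" and c: "c \<in> B"
    and T1: "is_tree B E1" and T0: "is_tree V0 E0"
  defines "E \<equiv> insert {r, c} (E0 \<union> E1)"
  shows "{e\<in>E. e \<subseteq> B} = E1" "{e\<in>E. e \<subseteq> V0} = E0"
    and "\<And>c'. c' \<in> B \<Longrightarrow> {r, c'} \<in> E \<Longrightarrow> c' = c"
proof -
  have sub1: "e \<subseteq> B" "\<not> e \<subseteq> V0" if "e \<in> E1" for e
    using tree_edge_subset[OF T1 that] tree_edge_nonempty[OF T1 that] disj by auto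
  have sub0: "e \<subseteq> V0" "\<not> e \<subseteq> B" if "e \<in> E0" for e
    using tree_edge_subset[OF T0 that] tree_edge_nonempty[OF T0 that] disj by auto
  have rc: "r \<notin> B" "c \<notin> V0"
    using disj r c by auto
  then show "{e\<in>E. e \<subseteq> B} = E1" "{e\<in>E. e \<subseteq> V0} = E0"
    using sub1 sub0 by (auto simp: E_def)
  show "c' = c" if "c' \<in> B" "{r, c'} \<in> E" for c'
  proof -
    have "{r, c'} \<notin> E1" "{r, c'} \<notin> E0"
      using sub1(1)[of "{r, c'}"] sub0(1)[of "{r, c'}"] rc that(1) disj by auto
    then show ?thesis
      using that rc by (auto simp: E_def doubleton_eq_iff)
  qed
qed

lemma branch_glued_tree:
  assumes disj: "V0 \<inter> B = {}" and r: "r \<in> V0" and p: "p \<in> B"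
    and T1: "is_tree B E1" and T0: "is_tree V0 E0"
  shows "branch (insert {r, c} (E0 \<union> E1)) r p = B"
proof (intro equalityI subsetI)
  fix v assume "v \<in> branch (insert {r, c} (E0 \<union> E1)) r p"
  then have "(p, v) \<in> (adj {e\<in>insert {r, c} (E0 \<union> E1). r \<notin> e})\<^sup>*"
    by (simp add: branch_def)
  then show "v \<in> B"
  proof (induction rule: rtrancl_induct)
    case base
    show ?case by fact
  next
    case (step y z)
    then have "{y, z} \<notin> E0"
      using tree_edge_subset[OF T0, of "{y, z}"] disj by auto
    with step have "{y, z} \<in> E1"
      by auto
    then show ?case
      using tree_edge_subset[OF T1, of "{y, z}"] by simp
  qed
next
  fix v assume "v \<in> B"
  then have "(p, v) \<in> (adj E1)\<^sup>*"
    using T1 p by (simp add: is_tree_iff)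
  moreover have "E1 \<subseteq> {e\<in>insert {r, c} (E0 \<union> E1). r \<notin> e}"
    using tree_edge_subset[OF T1] disj r by auto
  ultimately show "v \<in> branch (insert {r, c} (E0 \<union> E1)) r p"
    by (auto simp: branch_def intro: adj_rtrancl_mono)
qed

text \<open>A tree on \<open>insert r S\<close> is encoded by the vertex set \<open>B\<close> of the branch at \<open>r\<close> containing \<open>p\<close>,
  the vertex \<open>c \<in> B\<close> joined to \<open>r\<close>, the tree on \<open>B\<close> and the tree on the remaining vertices.\<close>

definition branch_decompositions ::
    "nat set \<Rightarrow> nat \<Rightarrow> nat \<Rightarrow> (nat set \<times> nat \<times> nat set set \<times> nat set set) set" where
  "branch_decompositions S r p = (SIGMA B:{B. p \<in> B \<and> B \<subseteq> S}. SIGMA c:B.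
    {E1. is_tree B E1} \<times> {E0. is_tree (insert r (S - B)) E0})"

definition glue_branch :: "nat \<Rightarrow> nat set \<times> nat \<times> nat set set \<times> nat set set \<Rightarrow> nat set set" where
  "glue_branch r = (\<lambda>(B, c, E1, E0). insert {r, c} (E0 \<union> E1))"

lemma inj_on_glue_branch:
  assumes "r \<notin> S"
  shows "inj_on (glue_branch r) (branch_decompositions S r p)"
proof (rule inj_onI)
  fix d d' assume d: "d \<in> branch_decompositions S r p" and d': "d' \<in> branch_decompositions S r p"
    and eq: "glue_branch r d = glue_branch r d'"
  obtain B c E1 E0 where dd: "d = (B, c, E1, E0)"
    by (cases d) auto
  obtain B' c' E1' E0' where dd': "d' = (B', c', E1', E0')"
    by (cases d') auto
  have B: "B \<subseteq> S" "p \<in> B" "c \<in> B" "is_tree B E1" "is_tree (insert r (S - B)) E0"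
    and B': "B' \<subseteq> S" "p \<in> B'" "c' \<in> B'" "is_tree B' E1'" "is_tree (insert r (S - B')) E0'"
    using d d' by (auto simp: dd dd' branch_decompositions_def)
  have disj: "insert r (S - B) \<inter> B = {}" "insert r (S - B') \<inter> B' = {}"
    using B(1) B'(1) assms by auto
  have E: "glue_branch r d = insert {r, c} (E0 \<union> E1)" "glue_branch r d = insert {r, c'} (E0' \<union> E1')"
    using eq by (simp_all add: dd dd' glue_branch_def)
  have "branch (glue_branch r d) r p = B"
    unfolding E(1) by (rule branch_glued_tree[OF disj(1) insertI1 B(2,4,5)])
  moreover have "branch (glue_branch r d) r p = B'"
    unfolding E(2) by (rule branch_glued_tree[OF disj(2) insertI1 B'(2,4,5)])
  ultimately have BB': "B = B'"
    by simp
  note parts = glued_tree_parts[OF disj(1) insertI1 B(3-5)] glued_tree_parts[OF disj(2) insertI1 B'(3-5)]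
  have "E1 = E1'" "E0 = E0'"
    using parts(1,2,4,5) unfolding E(1)[symmetric] E(2)[symmetric] BB' by simp_all
  moreover have "{r, c'} \<in> insert {r, c} (E0 \<union> E1)"
    using E by (metis insertI1)
  then have "c' = c"
    using B'(3) BB' by (intro parts(3)) simp_all
  ultimately show "d = d'"
    by (simp add: dd dd' BB')
qed

lemma glue_branch_image:
  assumes S: "finite S" "r \<notin> S" "p \<in> S"
  shows "glue_branch r ` branch_decompositions S r p = {E. is_tree (insert r S) E}"
proof (intro equalityI subsetI)
  fix E assume "E \<in> glue_branch r ` branch_decompositions S r p"
  then obtain B c E1 E0 where E: "E = insert {r, c} (E0 \<union> E1)"
    and B: "B \<subseteq> S" "c \<in> B" "is_tree B E1" "is_tree (insert r (S - B)) E0"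
    by (auto simp: glue_branch_def branch_decompositions_def)
  have "is_tree (insert r (S - B) \<union> B) (insert {r, c} (E0 \<union> E1))"
    using B S by (intro is_tree_glue) (auto intro: finite_subset)
  moreover have "insert r (S - B) \<union> B = insert r S"
    using B(1) by blast
  ultimately show "E \<in> {E. is_tree (insert r S) E}"
    by (simp add: E)
next
  fix E assume "E \<in> {E. is_tree (insert r S) E}"
  then obtain c where "branch E r p \<subseteq> S" "p \<in> branch E r p" "c \<in> branch E r p"
    "is_tree (branch E r p) {e\<in>E. e \<subseteq> branch E r p}"
    "is_tree (insert r (S - branch E r p)) {e\<in>E. e \<subseteq> insert r (S - branch E r p)}"
    "E = insert {r, c} ({e\<in>E. e \<subseteq> insert r (S - branch E r p)} \<union> {e\<in>E. e \<subseteq> branch E r p})"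
    using branch_split[OF _ S] by blast
  then show "E \<in> glue_branch r ` branch_decompositions S r p"
    by (intro image_eqI[of _ _ "(branch E r p, c, {e\<in>E. e \<subseteq> branch E r p},
        {e\<in>E. e \<subseteq> insert r (S - branch E r p)})"]) (simp_all add: glue_branch_def branch_decompositions_def)
qed

lemma sum_trees_insert_root:
  fixes F :: "nat set set \<Rightarrow> 'b::comm_monoid_add"
  assumes S: "finite S" "r \<notin> S" "p \<in> S"
  shows "(\<Sum>E\<in>{E. is_tree (insert r S) E}. F E) =
    (\<Sum>B\<in>{B. p \<in> B \<and> B \<subseteq> S}. \<Sum>c\<in>B. \<Sum>E1\<in>{E1. is_tree B E1}.
       \<Sum>E0\<in>{E0. is_tree (insert r (S - B)) E0}. F (insert {r, c} (E0 \<union> E1)))"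
proof -
  let ?T = "\<lambda>B. B \<times> {E1. is_tree B E1} \<times> {E0. is_tree (insert r (S - B)) E0}"
  have "bij_betw (glue_branch r) (branch_decompositions S r p) {E. is_tree (insert r S) E}"
    using inj_on_glue_branch[OF S(2)] glue_branch_image[OF S] by (rule bij_betw_imageI)
  then have "(\<Sum>E\<in>{E. is_tree (insert r S) E}. F E) =
      (\<Sum>d\<in>branch_decompositions S r p. F (glue_branch r d))"
    by (rule sum.reindex_bij_betw[symmetric])
  also have "\<dots> = (\<Sum>B\<in>{B. p \<in> B \<and> B \<subseteq> S}. \<Sum>t\<in>?T B. F (glue_branch r (B, t)))"
    unfolding branch_decompositions_def using S(1)
    by (subst sum.Sigma) (auto intro!: finite_trees intro: finite_subset)
  finally show ?thesis
    by (simp add: sum.cartesian_product glue_branch_def case_prod_unfold)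
qed

lemma is_tree_image:
  assumes inj: "inj_on \<pi> V" and T: "is_tree V E"
  shows "is_tree (\<pi> ` V) ((`) \<pi> ` E)"
proof -
  have e: "E \<subseteq> complete_edges V" and c: "card E + 1 = card V" and k: "\<forall>i\<in>V. \<forall>j\<in>V. (i, j) \<in> (adj E)\<^sup>*"
    using T by (auto simp: is_tree_iff)
  have "(`) \<pi> ` E \<subseteq> complete_edges (\<pi> ` V)"
  proof
    fix e' assume "e' \<in> (`) \<pi> ` E"
    then obtain e where "e \<in> E" "e' = \<pi> ` e" by blast
    then obtain i j where "e = {i, j}" "i \<noteq> j" "i \<in> V" "j \<in> V" using e by (auto elim!: complete_edgesE)
    then show "e' \<in> complete_edges (\<pi> ` V)" using \<open>e' = \<pi> ` e\<close> inj
      by (auto intro!: complete_edgesI dest: inj_onD)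
  qed
  moreover have "inj_on ((`) \<pi>) E"
  proof (rule inj_onI)
    fix a b assume "a \<in> E" "b \<in> E" "\<pi> ` a = \<pi> ` b"
    moreover have "a \<subseteq> V" "b \<subseteq> V" using \<open>a \<in> E\<close> \<open>b \<in> E\<close> e complete_edges_subset by auto
    ultimately show "a = b" using inj_on_image_eq_iff[OF inj] by blast
  qed
  then have "card ((`) \<pi> ` E) + 1 = card (\<pi> ` V)"
    using c card_image[OF inj] card_image by metis
  moreover have "(\<pi> i, \<pi> j) \<in> (adj ((`) \<pi> ` E))\<^sup>*" if "(i, j) \<in> (adj E)\<^sup>*" for i j
    using that
  proof (induction rule: rtrancl_induct)
    case base then show ?case by simp
  next
    case (step y z)
    then have "{\<pi> y, \<pi> z} \<in> (`) \<pi> ` E" by (metis adj_iff image_empty image_eqI image_insert)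
    then show ?case using step by (simp add: rtrancl_into_rtrancl)
  qed
  then have "\<forall>i\<in>\<pi> ` V. \<forall>j\<in>\<pi> ` V. (i, j) \<in> (adj ((`) \<pi> ` E))\<^sup>*" using k by blast
  ultimately show ?thesis by (simp add: is_tree_iff)
qed

lemma bij_betw_image_trees:
  assumes inj: "inj_on \<pi> V"
  shows "bij_betw (\<lambda>E. (`) \<pi> ` E) {E. is_tree V E} {E. is_tree (\<pi> ` V) E}"
proof (rule bij_betw_imageI)
  have injP: "inj_on ((`) \<pi>) (Pow V)"
    using inj_on_image_eq_iff[OF inj] by (auto simp: inj_on_def)
  show "inj_on (\<lambda>E. (`) \<pi> ` E) {E. is_tree V E}"
  proof (rule inj_onI)
    fix a b assume "a \<in> {E. is_tree V E}" "b \<in> {E. is_tree V E}" and eq: "(`) \<pi> ` a = (`) \<pi> ` b"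
    then have "a \<subseteq> complete_edges V" "b \<subseteq> complete_edges V" by (auto simp: is_tree_iff)
    then have "a \<subseteq> Pow V" "b \<subseteq> Pow V" using complete_edges_subset by blast+
    then show "a = b" using inj_on_image_eq_iff[OF injP] eq by blast
  qed
next
  show "(\<lambda>E. (`) \<pi> ` E) ` {E. is_tree V E} = {E. is_tree (\<pi> ` V) E}"
  proof (intro equalityI subsetI)
    fix E' assume "E' \<in> (\<lambda>E. (`) \<pi> ` E) ` {E. is_tree V E}"
    then show "E' \<in> {E. is_tree (\<pi> ` V) E}" using is_tree_image[OF inj] by auto
  next
    fix E' assume "E' \<in> {E. is_tree (\<pi> ` V) E}"
    then have T: "is_tree (\<pi> ` V) E'" by simp
    let ?\<sigma> = "inv_into V \<pi>"
    have inj': "inj_on ?\<sigma> (\<pi> ` V)" by (rule inj_on_inv_into) simp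
    have "?\<sigma> ` \<pi> ` V = V" using inj by simp
    then have T': "is_tree V ((`) ?\<sigma> ` E')" using is_tree_image[OF inj' T] by simp
    have sub: "e \<subseteq> \<pi> ` V" if "e \<in> E'" for e using T that complete_edges_subset by (auto simp: is_tree_iff)
    have "\<pi> ` ?\<sigma> ` e = e" if "e \<in> E'" for e
      using sub[OF that] by (auto simp: image_image f_inv_into_f) (metis f_inv_into_f image_eqI subsetD)
    then have "(`) \<pi> ` (`) ?\<sigma> ` E' = E'" by (simp add: image_image)
    then show "E' \<in> (\<lambda>E. (`) \<pi> ` E) ` {E. is_tree V E}" using T' by blast
  qed
qed

section \<open>Tree integrals of a symmetric kernel\<close>

lemma sum_Pow_card:
  fixes h :: "nat \<Rightarrow> 'b::comm_semiring_1"
  assumes A: "finite A"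
  shows "(\<Sum>B\<in>Pow A. h (card B)) = (\<Sum>j\<le>card A. of_nat (card A choose j) * h j)"
proof -
  have "(\<Sum>B\<in>Pow A. h (card B)) = (\<Sum>j\<le>card A. \<Sum>B\<in>{B. B \<in> Pow A \<and> card B = j}. h (card B))"
    by (rule sum.group[symmetric]) (use A in \<open>auto intro: card_mono\<close>)
  also have "\<dots> = (\<Sum>j\<le>card A. of_nat (card A choose j) * h j)"
  proof (intro sum.cong refl)
    fix j
    have "(\<Sum>B\<in>{B. B \<in> Pow A \<and> card B = j}. h (card B)) = (\<Sum>B\<in>{B. B \<subseteq> A \<and> card B = j}. h j)"
      by (intro sum.cong) auto
    then show "(\<Sum>B\<in>{B. B \<in> Pow A \<and> card B = j}. h (card B)) = of_nat (card A choose j) * h j"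
      using n_subsets[OF A, of j] by simp
  qed
  finally show ?thesis .
qed

lemma vimage_reindex_PiE:
  assumes bij: "bij_betw \<pi> S S'" and A: "\<And>i. i \<in> S' \<Longrightarrow> A i \<subseteq> space M"
  shows "(\<lambda>x. \<lambda>i\<in>S'. x (inv_into S \<pi> i)) -` PiE S' A \<inter> space (PiM S (\<lambda>_. M)) = PiE S (\<lambda>i. A (\<pi> i))"
proof (intro equalityI subsetI)
  fix x assume x: "x \<in> (\<lambda>x. \<lambda>i\<in>S'. x (inv_into S \<pi> i)) -` PiE S' A \<inter> space (PiM S (\<lambda>_. M))"
  show "x \<in> PiE S (\<lambda>i. A (\<pi> i))"
  proof (rule PiE_I)
    fix i assume i: "i \<in> S"
    then have "\<pi> i \<in> S'" "inv_into S \<pi> (\<pi> i) = i"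
      using bij by (auto simp: bij_betw_def)
    then show "x i \<in> A (\<pi> i)"
      using x by (auto simp: PiE_iff)
  next
    fix i assume "i \<notin> S"
    then show "x i = undefined"
      using x by (auto simp: space_PiM PiE_iff extensional_def)
  qed
next
  fix x assume x: "x \<in> PiE S (\<lambda>i. A (\<pi> i))"
  have "\<pi> i \<in> S'" if "i \<in> S" for i
    using bij that by (auto simp: bij_betw_def)
  then have "x \<in> space (PiM S (\<lambda>_. M))"
    using x A by (force simp: space_PiM PiE_iff)
  moreover have "x (inv_into S \<pi> i) \<in> A i" if "i \<in> S'" for i
  proof -
    have "inv_into S \<pi> i \<in> S" "\<pi> (inv_into S \<pi> i) = i"
      using bij that by (auto simp: bij_betw_def f_inv_into_f inv_into_into)
    then show ?thesis
      using x by (auto simp: PiE_iff)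
  qed
  then have "(\<lambda>i\<in>S'. x (inv_into S \<pi> i)) \<in> PiE S' A"
    by simp
  ultimately show "x \<in> (\<lambda>x. \<lambda>i\<in>S'. x (inv_into S \<pi> i)) -` PiE S' A \<inter> space (PiM S (\<lambda>_. M))"
    by simp
qed

lemma (in sigma_finite_measure) distr_PiM_reindex:
  assumes S: "finite S" and bij: "bij_betw \<pi> S S'"
  shows "distr (PiM S (\<lambda>_. M)) (PiM S' (\<lambda>_. M)) (\<lambda>x. \<lambda>i\<in>S'. x (inv_into S \<pi> i)) = PiM S' (\<lambda>_. M)"
proof -
  interpret P: product_sigma_finite "\<lambda>_. M"
    by (simp add: product_sigma_finite_def sigma_finite_measure_axioms)
  let ?\<phi> = "\<lambda>x. \<lambda>i\<in>S'. x (inv_into S \<pi> i)"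
  have S': "finite S'"
    using bij S bij_betw_finite by blast
  have "inv_into S \<pi> i \<in> S" if "i \<in> S'" for i
    using bij that by (auto simp: bij_betw_def inv_into_into)
  then have \<phi>_meas: "?\<phi> \<in> PiM S (\<lambda>_. M) \<rightarrow>\<^sub>M PiM S' (\<lambda>_. M)"
    by (intro measurable_restrict measurable_component_singleton)
  show ?thesis
  proof (rule P.PiM_eqI[OF S'])
    fix A assume A: "\<And>i. i \<in> S' \<Longrightarrow> A i \<in> sets M"
    then have A_space: "A i \<subseteq> space M" if "i \<in> S'" for i
      using that by (simp add: sets.sets_into_space)
    have "emeasure (distr (PiM S (\<lambda>_. M)) (PiM S' (\<lambda>_. M)) ?\<phi>) (PiE S' A) =
        emeasure (PiM S (\<lambda>_. M)) (PiE S (\<lambda>i. A (\<pi> i)))"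
      using A \<phi>_meas S' vimage_reindex_PiE[OF bij A_space]
      by (subst emeasure_distr) (auto intro!: sets_PiM_I_finite)
    also have "\<dots> = (\<Prod>i\<in>S. emeasure M (A (\<pi> i)))"
      using A bij S by (subst P.emeasure_PiM) (auto simp: bij_betw_def)
    also have "\<dots> = (\<Prod>i\<in>S'. emeasure M (A i))"
      by (rule prod.reindex_bij_betw[OF bij])
    finally show "emeasure (distr (PiM S (\<lambda>_. M)) (PiM S' (\<lambda>_. M)) ?\<phi>) (PiE S' A) =
        (\<Prod>i\<in>S'. emeasure M (A i))" .
  qed simp
qed

locale symmetric_kernel = sigma_finite_measure M for M :: "'a measure" +
  fixes w :: "'a \<Rightarrow> 'a \<Rightarrow> ennreal"
  assumes space_M: "space M = UNIV"
    and w_measurable: "(\<lambda>p. w (fst p) (snd p)) \<in> borel_measurable (M \<Otimes>\<^sub>M M)"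
    and w_sym: "w x y = w y x"
begin

interpretation P: product_sigma_finite "\<lambda>_. M"
  by (simp add: product_sigma_finite_def sigma_finite_measure_axioms)

definition tree_weight :: "nat \<Rightarrow> nat set \<Rightarrow> (nat \<Rightarrow> 'a) \<Rightarrow> ennreal" where
  "tree_weight r S y = (\<Sum>E\<in>{E. is_tree (insert r S) E}. \<Prod>e\<in>E. w (y (Min e)) (y (Max e)))"

definition rooted_tree_integral :: "nat \<Rightarrow> nat set \<Rightarrow> 'a \<Rightarrow> ennreal" where
  "rooted_tree_integral r S q = (\<integral>\<^sup>+x. tree_weight r S (x(r := q)) \<partial>PiM S (\<lambda>_. M))"

text \<open>\<open>tree_integral n\<close> and \<open>branch_integral n\<close> are the functions \<open>G\<^sub>n\<close> and \<open>g\<^sub>n\<close> of the introduction.\<close>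

definition tree_integral :: "nat \<Rightarrow> 'a \<Rightarrow> ennreal" where
  "tree_integral n q = rooted_tree_integral 0 {1..n} q"

definition branch_integral :: "nat \<Rightarrow> 'a \<Rightarrow> ennreal" where
  "branch_integral n q = (\<integral>\<^sup>+y. w q y * tree_integral n y \<partial>M)"

definition tree_series :: "'a \<Rightarrow> ennreal" where
  "tree_series q = (\<Sum>n. ennreal (1 / fact n) * tree_integral n q)"

lemma w_measurable_compose:
  assumes "f \<in> K \<rightarrow>\<^sub>M M" "g \<in> K \<rightarrow>\<^sub>M M"
  shows "(\<lambda>x. w (f x) (g x)) \<in> borel_measurable K"
  using measurable_compose[OF measurable_Pair[OF assms] w_measurable] by simp

lemma w_section_measurable [measurable]: "w q \<in> borel_measurable M"
  using w_measurable_compose[of "\<lambda>_. q" M id] by (simp add: space_M)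

lemma measurable_update_component:
  "i \<in> insert r S \<Longrightarrow> (\<lambda>x. (x(r := q)) i) \<in> PiM S (\<lambda>_. M) \<rightarrow>\<^sub>M M"
  by (cases "i = r") (auto simp: space_M)

lemma edge_weight_doubleton: "w (y (Min {i, j})) (y (Max {i, j})) = w (y i) (y j)"
  by (cases "i \<le> j") (auto simp: max_def min_def w_sym)

lemma tree_weight_cong:
  assumes "\<And>i. i \<in> insert r S \<Longrightarrow> y i = y' i"
  shows "tree_weight r S y = tree_weight r S y'"
  unfolding tree_weight_def
proof (intro sum.cong refl prod.cong)
  fix E e assume "E \<in> {E. is_tree (insert r S) E}" "e \<in> E"
  then obtain i j where e: "e = {i, j}" "i \<in> insert r S" "j \<in> insert r S"
    by (auto elim: tree_edgeE)
  then show "w (y (Min e)) (y (Max e)) = w (y' (Min e)) (y' (Max e))"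
    unfolding e(1) edge_weight_doubleton using assms by simp
qed

lemma tree_weight_measurable:
  assumes "\<And>i. i \<in> insert r S \<Longrightarrow> (\<lambda>x. h x i) \<in> K \<rightarrow>\<^sub>M M"
  shows "(\<lambda>x. tree_weight r S (h x)) \<in> borel_measurable K"
  unfolding tree_weight_def
proof (intro borel_measurable_sum borel_measurable_prod_ennreal)
  fix E e assume "E \<in> {E. is_tree (insert r S) E}" "e \<in> E"
  then obtain i j where e: "e = {i, j}" "i \<in> insert r S" "j \<in> insert r S"
    by (auto elim: tree_edgeE)
  then show "(\<lambda>x. w (h x (Min e)) (h x (Max e))) \<in> borel_measurable K"
    unfolding e(1) edge_weight_doubleton by (intro w_measurable_compose assms)
qed

lemma tree_weight_split:
  assumes S: "finite S" "r \<notin> S" "p \<in> S"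
  shows "tree_weight r S y = (\<Sum>B\<in>{B. p \<in> B \<and> B \<subseteq> S}. \<Sum>c\<in>B.
    w (y r) (y c) * tree_weight c (B - {c}) y * tree_weight r (S - B) y)"
proof -
  let ?P = "\<lambda>E. \<Prod>e\<in>E. w (y (Min e)) (y (Max e))"
  have "tree_weight r S y = (\<Sum>B\<in>{B. p \<in> B \<and> B \<subseteq> S}. \<Sum>c\<in>B. \<Sum>E1\<in>{E1. is_tree B E1}.
      \<Sum>E0\<in>{E0. is_tree (insert r (S - B)) E0}. ?P (insert {r, c} (E0 \<union> E1)))"
    unfolding tree_weight_def by (rule sum_trees_insert_root[OF S])
  also have "\<dots> = (\<Sum>B\<in>{B. p \<in> B \<and> B \<subseteq> S}. \<Sum>c\<in>B. \<Sum>E1\<in>{E1. is_tree B E1}.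
      \<Sum>E0\<in>{E0. is_tree (insert r (S - B)) E0}. w (y r) (y c) * ?P E1 * ?P E0)"
  proof (intro sum.cong refl)
    fix B c E1 E0
    assume B: "B \<in> {B. p \<in> B \<and> B \<subseteq> S}" and c: "c \<in> B"
      and E1: "E1 \<in> {E1. is_tree B E1}" and E0: "E0 \<in> {E0. is_tree (insert r (S - B)) E0}"
    have "finite B"
      using B S(1) finite_subset by blast
    then have fin: "finite E1" "finite E0"
      using E1 E0 S(1) finite_tree_edges[of B E1] finite_tree_edges[of "insert r (S - B)" E0] by simp_all
    have disj: "insert r (S - B) \<inter> B = {}"
      using B S(2) by blast
    have "{r, c} \<notin> E1"
      using tree_edge_subset[of B E1 "{r, c}"] E1 disj by blast
    moreover have "{r, c} \<notin> E0"
      using tree_edge_subset[of "insert r (S - B)" E0 "{r, c}"] E0 disj c by blast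
    moreover have "E0 \<inter> E1 = {}"
      using tree_edges_disjoint E0 E1 disj by blast
    ultimately show "?P (insert {r, c} (E0 \<union> E1)) = w (y r) (y c) * ?P E1 * ?P E0"
      using fin by (simp add: prod.union_disjoint edge_weight_doubleton[simplified] mult_ac)
  qed
  also have "\<dots> = (\<Sum>B\<in>{B. p \<in> B \<and> B \<subseteq> S}. \<Sum>c\<in>B.
      w (y r) (y c) * tree_weight c (B - {c}) y * tree_weight r (S - B) y)"
  proof (intro sum.cong refl)
    fix B :: "nat set" and c assume "c \<in> B"
    then have "insert c (B - {c}) = B"
      by auto
    then show "(\<Sum>E1\<in>{E1. is_tree B E1}. \<Sum>E0\<in>{E0. is_tree (insert r (S - B)) E0}.
        w (y r) (y c) * ?P E1 * ?P E0) = w (y r) (y c) * tree_weight c (B - {c}) y * tree_weight r (S - B) y"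
      by (simp add: tree_weight_def sum_distrib_left sum_distrib_right mult_ac)
  qed
  finally show ?thesis .
qed

lemma nn_integral_root_edge:
  assumes "finite B" "c \<in> B"
  shows "(\<integral>\<^sup>+x. w q (x c) * tree_weight c (B - {c}) x \<partial>PiM B (\<lambda>_. M)) =
    (\<integral>\<^sup>+y. w q y * rooted_tree_integral c (B - {c}) y \<partial>M)"
proof -
  let ?A = "\<lambda>x. w q (x c) * tree_weight c (B - {c}) x"
  have cB: "insert c (B - {c}) = B"
    using assms(2) by auto
  have "?A \<in> borel_measurable (PiM (insert c (B - {c})) (\<lambda>_. M))"
    by (intro borel_measurable_times_ennreal w_measurable_compose tree_weight_measurable)
      (auto simp: space_M)
  have "(\<integral>\<^sup>+x. ?A x \<partial>PiM B (\<lambda>_. M)) = (\<integral>\<^sup>+x. ?A x \<partial>PiM (insert c (B - {c})) (\<lambda>_. M))"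
    by (simp only: cB)
  also have "\<dots> = (\<integral>\<^sup>+y. \<integral>\<^sup>+x. ?A (x(c := y)) \<partial>PiM (B - {c}) (\<lambda>_. M) \<partial>M)"
    using assms(1) \<open>?A \<in> _\<close> by (intro P.product_nn_integral_insert_rev) auto
  also have "\<dots> = (\<integral>\<^sup>+y. w q y * rooted_tree_integral c (B - {c}) y \<partial>M)"
  proof (intro nn_integral_cong)
    fix y
    have "(\<lambda>x. tree_weight c (B - {c}) (x(c := y))) \<in> borel_measurable (PiM (B - {c}) (\<lambda>_. M))"
      by (intro tree_weight_measurable measurable_update_component)
    then show "(\<integral>\<^sup>+x. ?A (x(c := y)) \<partial>PiM (B - {c}) (\<lambda>_. M)) = w q y * rooted_tree_integral c (B - {c}) y"
      by (simp add: rooted_tree_integral_def nn_integral_cmult)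
  qed
  finally show ?thesis .
qed

text \<open>Fubini: the weight of a tree whose root branch has vertex set \<open>B\<close> factorizes into a
  function of the coordinates in \<open>B\<close> and a function of those in \<open>S - B\<close>.\<close>

lemma nn_integral_branch_factor:
  assumes S: "finite S" "r \<notin> S" and B: "B \<subseteq> S" "c \<in> B"
  shows "(\<integral>\<^sup>+x. w q (x c) * tree_weight c (B - {c}) x * tree_weight r (S - B) (x(r := q)) \<partial>PiM S (\<lambda>_. M))
    = (\<integral>\<^sup>+y. w q y * rooted_tree_integral c (B - {c}) y \<partial>M) * rooted_tree_integral r (S - B) q"
proof -
  have fB: "finite B"
    using B S finite_subset by blast
  have SB: "B \<union> (S - B) = S"
    using B by auto
  let ?A = "\<lambda>x. w q (x c) * tree_weight c (B - {c}) x"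
  let ?C = "\<lambda>x. tree_weight r (S - B) (x(r := q))"
  have A_meas: "?A \<in> borel_measurable (PiM B (\<lambda>_. M))"
    using B by (intro borel_measurable_times_ennreal w_measurable_compose tree_weight_measurable)
      (auto simp: space_M)
  have C_meas: "?C \<in> borel_measurable (PiM (S - B) (\<lambda>_. M))"
    by (intro tree_weight_measurable measurable_update_component)
  have AC_meas: "(\<lambda>x. ?A x * ?C x) \<in> borel_measurable (PiM (B \<union> (S - B)) (\<lambda>_. M))"
    using B by (intro borel_measurable_times_ennreal w_measurable_compose tree_weight_measurable
        measurable_update_component) (auto simp: space_M)
  have "(\<integral>\<^sup>+x. ?A x * ?C x \<partial>PiM S (\<lambda>_. M)) = (\<integral>\<^sup>+x. ?A x * ?C x \<partial>PiM (B \<union> (S - B)) (\<lambda>_. M))"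
    by (simp only: SB)
  also have "\<dots> = (\<integral>\<^sup>+x. \<integral>\<^sup>+y. ?A (merge B (S - B) (x, y)) * ?C (merge B (S - B) (x, y))
      \<partial>PiM (S - B) (\<lambda>_. M) \<partial>PiM B (\<lambda>_. M))"
    using fB S(1) AC_meas by (intro P.product_nn_integral_fold) auto
  also have "\<dots> = (\<integral>\<^sup>+x. \<integral>\<^sup>+y. ?A x * ?C y \<partial>PiM (S - B) (\<lambda>_. M) \<partial>PiM B (\<lambda>_. M))"
  proof (intro nn_integral_cong)
    fix x y
    have "?A (merge B (S - B) (x, y)) = ?A x"
      using B by (intro arg_cong2[where f = "(*)"] tree_weight_cong) (auto simp: merge_def)
    moreover have "?C (merge B (S - B) (x, y)) = ?C y"
      using B S by (intro tree_weight_cong) (auto simp: merge_def)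
    ultimately show "?A (merge B (S - B) (x, y)) * ?C (merge B (S - B) (x, y)) = ?A x * ?C y"
      by simp
  qed
  also have "\<dots> = (\<integral>\<^sup>+x. ?A x * rooted_tree_integral r (S - B) q \<partial>PiM B (\<lambda>_. M))"
    by (simp add: nn_integral_cmult[OF C_meas] rooted_tree_integral_def)
  also have "\<dots> = (\<integral>\<^sup>+x. ?A x \<partial>PiM B (\<lambda>_. M)) * rooted_tree_integral r (S - B) q"
    by (rule nn_integral_multc[OF A_meas])
  also have "(\<integral>\<^sup>+x. ?A x \<partial>PiM B (\<lambda>_. M)) = (\<integral>\<^sup>+y. w q y * rooted_tree_integral c (B - {c}) y \<partial>M)"
    using fB B(2) by (rule nn_integral_root_edge)
  finally show ?thesis .
qed

lemma rooted_tree_integral_split: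
  assumes S: "finite S" "r \<notin> S" "p \<in> S"
  shows "rooted_tree_integral r S q = (\<Sum>B\<in>{B. p \<in> B \<and> B \<subseteq> S}. \<Sum>c\<in>B.
    (\<integral>\<^sup>+y. w q y * rooted_tree_integral c (B - {c}) y \<partial>M) * rooted_tree_integral r (S - B) q)"
proof -
  let ?F = "\<lambda>B c x. w q (x c) * tree_weight c (B - {c}) x * tree_weight r (S - B) (x(r := q))"
  have F_meas: "?F B c \<in> borel_measurable (PiM S (\<lambda>_. M))" if "B \<subseteq> S" "c \<in> B" for B c
    using that by (intro borel_measurable_times_ennreal w_measurable_compose tree_weight_measurable
        measurable_update_component) (auto simp: space_M)
  have "rooted_tree_integral r S q =
      (\<integral>\<^sup>+x. (\<Sum>B\<in>{B. p \<in> B \<and> B \<subseteq> S}. \<Sum>c\<in>B. ?F B c x) \<partial>PiM S (\<lambda>_. M))"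
    unfolding rooted_tree_integral_def
  proof (intro nn_integral_cong)
    fix x
    show "tree_weight r S (x(r := q)) = (\<Sum>B\<in>{B. p \<in> B \<and> B \<subseteq> S}. \<Sum>c\<in>B. ?F B c x)"
      unfolding tree_weight_split[OF S]
    proof (intro sum.cong refl)
      fix B c assume B: "B \<in> {B. p \<in> B \<and> B \<subseteq> S}" and c: "c \<in> B"
      have "tree_weight c (B - {c}) (x(r := q)) = tree_weight c (B - {c}) x"
        using B c S(2) by (intro tree_weight_cong) auto
      moreover have "c \<noteq> r"
        using B c S(2) by auto
      ultimately show "w ((x(r := q)) r) ((x(r := q)) c) * tree_weight c (B - {c}) (x(r := q)) *
          tree_weight r (S - B) (x(r := q)) = ?F B c x"
        by simp
    qed
  qed
  also have "\<dots> = (\<Sum>B\<in>{B. p \<in> B \<and> B \<subseteq> S}. \<integral>\<^sup>+x. (\<Sum>c\<in>B. ?F B c x) \<partial>PiM S (\<lambda>_. M))"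
    using F_meas by (intro nn_integral_sum borel_measurable_sum) auto
  also have "\<dots> = (\<Sum>B\<in>{B. p \<in> B \<and> B \<subseteq> S}. \<Sum>c\<in>B. \<integral>\<^sup>+x. ?F B c x \<partial>PiM S (\<lambda>_. M))"
    using F_meas by (intro sum.cong refl nn_integral_sum) auto
  also have "\<dots> = (\<Sum>B\<in>{B. p \<in> B \<and> B \<subseteq> S}. \<Sum>c\<in>B.
      (\<integral>\<^sup>+y. w q y * rooted_tree_integral c (B - {c}) y \<partial>M) * rooted_tree_integral r (S - B) q)"
    using nn_integral_branch_factor[OF S(1,2)] by (intro sum.cong refl) auto
  finally show ?thesis .
qed

lemma tree_weight_relabel:
  assumes inj: "inj_on \<rho> (insert r S)"
  shows "tree_weight (\<rho> r) (\<rho> ` insert r S - {\<rho> r}) y = tree_weight r S (y \<circ> \<rho>)"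
proof -
  let ?P = "\<lambda>y E. \<Prod>e\<in>E. w (y (Min e)) (y (Max e))"
  have "insert (\<rho> r) (\<rho> ` insert r S - {\<rho> r}) = \<rho> ` insert r S"
    by auto
  then have "tree_weight (\<rho> r) (\<rho> ` insert r S - {\<rho> r}) y =
      (\<Sum>E\<in>{E. is_tree (\<rho> ` insert r S) E}. ?P y E)"
    by (simp add: tree_weight_def)
  also have "\<dots> = (\<Sum>E\<in>{E. is_tree (insert r S) E}. ?P y ((`) \<rho> ` E))"
    by (rule sum.reindex_bij_betw[OF bij_betw_image_trees[OF inj], symmetric])
  also have "\<dots> = (\<Sum>E\<in>{E. is_tree (insert r S) E}. ?P (y \<circ> \<rho>) E)"
  proof (intro sum.cong refl)
    fix E assume E: "E \<in> {E. is_tree (insert r S) E}"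
    have "inj_on ((`) \<rho>) E"
      using inj_on_image_eq_iff[OF inj] tree_edge_subset[of "insert r S" E] E
      by (simp add: inj_on_def)
    then have "?P y ((`) \<rho> ` E) = (\<Prod>e\<in>E. w (y (Min (\<rho> ` e))) (y (Max (\<rho> ` e))))"
      by (simp add: prod.reindex)
    also have "\<dots> = ?P (y \<circ> \<rho>) E"
    proof (intro prod.cong refl)
      fix e assume "e \<in> E"
      then obtain i j where e: "e = {i, j}"
        using E by (auto elim: tree_edgeE)
      show "w (y (Min (\<rho> ` e))) (y (Max (\<rho> ` e))) = w ((y \<circ> \<rho>) (Min e)) ((y \<circ> \<rho>) (Max e))"
        unfolding e image_insert image_empty edge_weight_doubleton by simp
    qed
    finally show "?P y ((`) \<rho> ` E) = ?P (y \<circ> \<rho>) E" .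
  qed
  finally show ?thesis
    by (simp add: tree_weight_def)
qed

lemma rooted_tree_integral_relabel:
  assumes S: "finite S" "r \<notin> S" and S': "r' \<notin> S'" and bij: "bij_betw \<pi> S S'"
  shows "rooted_tree_integral r' S' q = rooted_tree_integral r S q"
proof -
  let ?\<phi> = "\<lambda>x. \<lambda>i\<in>S'. x (inv_into S \<pi> i)"
  define \<rho> where "\<rho> = \<pi>(r := r')"
  have \<pi>: "\<pi> i \<in> S'" "inv_into S \<pi> (\<pi> i) = i" if "i \<in> S" for i
    using bij that by (auto simp: bij_betw_def)
  have "inj_on \<rho> (insert r S)" "\<rho> ` insert r S - {\<rho> r} = S'" "\<rho> r = r'"
    using bij S S' \<pi> by (auto simp: \<rho>_def inj_on_def bij_betw_def)
  then have weight: "tree_weight r' S' ((?\<phi> x)(r' := q)) = tree_weight r S (x(r := q))" for x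
    using tree_weight_relabel[of \<rho> r S "(?\<phi> x)(r' := q)"] \<pi> S(2) S'
    by (auto simp: \<rho>_def intro!: tree_weight_cong)
  have "inv_into S \<pi> i \<in> S" if "i \<in> S'" for i
    using bij that by (auto simp: bij_betw_def inv_into_into)
  then have \<phi>_meas: "?\<phi> \<in> PiM S (\<lambda>_. M) \<rightarrow>\<^sub>M PiM S' (\<lambda>_. M)"
    by (intro measurable_restrict measurable_component_singleton)
  have "rooted_tree_integral r' S' q =
      (\<integral>\<^sup>+x. tree_weight r' S' (x(r' := q)) \<partial>distr (PiM S (\<lambda>_. M)) (PiM S' (\<lambda>_. M)) ?\<phi>)"
    unfolding rooted_tree_integral_def distr_PiM_reindex[OF S(1) bij] ..
  also have "\<dots> = (\<integral>\<^sup>+x. tree_weight r' S' ((?\<phi> x)(r' := q)) \<partial>PiM S (\<lambda>_. M))"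
  proof (rule nn_integral_distr[OF \<phi>_meas])
    show "(\<lambda>x. tree_weight r' S' (x(r' := q))) \<in> borel_measurable (distr (PiM S (\<lambda>_. M)) (PiM S' (\<lambda>_. M)) ?\<phi>)"
      unfolding distr_PiM_reindex[OF S(1) bij] by (intro tree_weight_measurable measurable_update_component)
  qed
  also have "\<dots> = rooted_tree_integral r S q"
    by (simp add: rooted_tree_integral_def weight)
  finally show ?thesis .
qed

lemma rooted_tree_integral_eq_tree_integral:
  assumes "finite S" "r \<notin> S"
  shows "rooted_tree_integral r S q = tree_integral (card S) q"
proof -
  obtain h where h: "bij_betw h {1..card S} S"
    using ex_bij_betw_nat_finite_1[OF assms(1)] by blast
  show ?thesis
    unfolding tree_integral_def by (rule rooted_tree_integral_relabel[OF _ _ assms(2) h]) auto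
qed

lemma tree_integral_0: "tree_integral 0 q = 1"
proof -
  have "complete_edges {0} = {}"
    by (auto simp: complete_edges_def)
  then have "{E. is_tree {0} E} = {{}}"
    by (auto simp: is_tree_iff)
  then have weight: "tree_weight 0 {} y = 1" for y
    by (simp add: tree_weight_def)
  have "tree_integral 0 q = (\<integral>\<^sup>+x. tree_weight 0 {} (x(0 := q)) \<partial>PiM {} (\<lambda>_. M))"
    by (simp add: tree_integral_def rooted_tree_integral_def)
  also have "\<dots> = 1"
    by (subst P.nn_integral_empty) (simp_all only: weight zero_le)
  finally show ?thesis .
qed

text \<open>Split off the branch at the root \<open>0\<close> that contains vertex \<open>1\<close>; it has \<open>j + 1\<close> vertices,
  \<open>n choose j\<close> choices of its other vertices and \<open>j + 1\<close> choices of the vertex joined to the root.\<close>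

lemma tree_integral_Suc:
  "tree_integral (Suc n) q =
    (\<Sum>j\<le>n. of_nat (n choose j) * of_nat (Suc j) * branch_integral j q * tree_integral (n - j) q)"
proof -
  let ?S = "{1..Suc n}"
  let ?h = "\<lambda>j. of_nat (Suc j) * branch_integral j q * tree_integral (n - j) q"
  have "tree_integral (Suc n) q = (\<Sum>B\<in>{B. 1 \<in> B \<and> B \<subseteq> ?S}. \<Sum>c\<in>B.
      (\<integral>\<^sup>+y. w q y * rooted_tree_integral c (B - {c}) y \<partial>M) * rooted_tree_integral 0 (?S - B) q)"
    unfolding tree_integral_def by (rule rooted_tree_integral_split) auto
  also have "\<dots> = (\<Sum>B\<in>{B. 1 \<in> B \<and> B \<subseteq> ?S}. ?h (card B - 1))"
  proof (intro sum.cong refl)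
    fix B assume B: "B \<in> {B. 1 \<in> B \<and> B \<subseteq> ?S}"
    have fB: "finite B"
      using B finite_subset by blast
    have "card B \<noteq> 0"
      using B fB by auto
    then have cB: "card B = Suc (card B - 1)"
      by simp
    have "rooted_tree_integral c (B - {c}) y = tree_integral (card B - 1) y" if "c \<in> B" for c y
      using rooted_tree_integral_eq_tree_integral[of "B - {c}" c y] fB that by simp
    moreover have "rooted_tree_integral 0 (?S - B) q = tree_integral (n - (card B - 1)) q"
      using rooted_tree_integral_eq_tree_integral[of "?S - B" 0 q] B fB cB
      by (simp add: card_Diff_subset)
    ultimately show "(\<Sum>c\<in>B. (\<integral>\<^sup>+y. w q y * rooted_tree_integral c (B - {c}) y \<partial>M) *
        rooted_tree_integral 0 (?S - B) q) = ?h (card B - 1)"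
      using arg_cong[OF cB, of "of_nat :: nat \<Rightarrow> ennreal"] by (simp add: branch_integral_def mult_ac)
  qed
  also have "\<dots> = (\<Sum>B\<in>Pow {2..Suc n}. ?h (card B))"
  proof (rule sum.reindex_bij_witness[where i = "insert 1" and j = "\<lambda>B. B - {1}"], goal_cases)
    case (5 B)
    then have "finite B" "1 \<in> B"
      using finite_subset by auto
    then show ?case
      by (simp add: card_Diff_singleton)
  qed auto
  also have "\<dots> = (\<Sum>j\<le>n. of_nat (n choose j) * ?h j)"
    using sum_Pow_card[of "{2..Suc n}" ?h] by simp
  finally show ?thesis
    by (simp add: mult_ac)
qed

lemma tree_integral_measurable [measurable]: "tree_integral n \<in> borel_measurable M"
proof -
  interpret PiM: finite_product_sigma_finite "\<lambda>_. M" "{1..n}"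
    by standard simp
  have "(\<lambda>(q, x). tree_weight 0 {1..n} (x(0 := q))) \<in> borel_measurable (M \<Otimes>\<^sub>M PiM {1..n} (\<lambda>_. M))"
    unfolding case_prod_unfold
  proof (rule tree_weight_measurable)
    fix i :: nat assume "i \<in> insert 0 {1..n}"
    then show "(\<lambda>p. ((snd p)(0 := fst p)) i) \<in> M \<Otimes>\<^sub>M PiM {1..n} (\<lambda>_. M) \<rightarrow>\<^sub>M M"
      by (cases "i = 0") auto
  qed
  then show ?thesis
    unfolding tree_integral_def rooted_tree_integral_def by (rule PiM.borel_measurable_nn_integral)
qed

lemma nn_integral_w_partial_tree_series:
  "(\<integral>\<^sup>+y. w q y * (\<Sum>n<K. ennreal (1 / fact n) * tree_integral n y) \<partial>M) =
    (\<Sum>n<K. ennreal (1 / fact n) * branch_integral n q)"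
proof -
  have "(\<integral>\<^sup>+y. w q y * (\<Sum>n<K. ennreal (1 / fact n) * tree_integral n y) \<partial>M) =
      (\<integral>\<^sup>+y. (\<Sum>n<K. ennreal (1 / fact n) * (w q y * tree_integral n y)) \<partial>M)"
    by (simp add: sum_distrib_left mult_ac)
  also have "\<dots> = (\<Sum>n<K. \<integral>\<^sup>+y. ennreal (1 / fact n) * (w q y * tree_integral n y) \<partial>M)"
    by (rule nn_integral_sum) measurable
  also have "\<dots> = (\<Sum>n<K. ennreal (1 / fact n) * branch_integral n q)"
    by (simp add: nn_integral_cmult branch_integral_def)
  finally show ?thesis .
qed

lemma nn_integral_w_tree_series:
  "(\<integral>\<^sup>+y. w q y * tree_series y \<partial>M) = (\<Sum>n. ennreal (1 / fact n) * branch_integral n q)"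
proof -
  have "(\<integral>\<^sup>+y. w q y * tree_series y \<partial>M) =
      (\<integral>\<^sup>+y. (\<Sum>n. ennreal (1 / fact n) * (w q y * tree_integral n y)) \<partial>M)"
    by (simp add: tree_series_def mult_ac flip: ennreal_suminf_cmult)
  also have "\<dots> = (\<Sum>n. \<integral>\<^sup>+y. ennreal (1 / fact n) * (w q y * tree_integral n y) \<partial>M)"
    by (rule nn_integral_suminf) measurable
  also have "\<dots> = (\<Sum>n. ennreal (1 / fact n) * branch_integral n q)"
    by (simp add: nn_integral_cmult branch_integral_def)
  finally show ?thesis .
qed

lemma one_le_tree_series: "1 \<le> tree_series q"
  using sum_le_suminf[OF summableI, of "{0}" "\<lambda>n. ennreal (1 / fact n) * tree_integral n q"]
  by (simp add: tree_series_def tree_integral_0)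

lemma nn_integral_w_tree_series_le_ln:
  assumes "tree_series q < \<infinity>"
  shows "(\<integral>\<^sup>+y. w q y * tree_series y \<partial>M) \<le> ennreal (ln (enn2real (tree_series q)))"
  unfolding nn_integral_w_tree_series
  using binomial_recursion_suminf_le_ln[where G = "\<lambda>n. tree_integral n q" and g = "\<lambda>j. branch_integral j q",
      OF tree_integral_0 tree_integral_Suc] assms
  by (simp add: tree_series_def)

lemma tree_series_le_exp:
  assumes nonneg: "\<And>x. 0 \<le> a x"
    and sub: "\<And>q. (\<integral>\<^sup>+y. w q y * ennreal (exp (a y)) \<partial>M) \<le> ennreal (a q)"
  shows "tree_series q \<le> ennreal (exp (a q))"
proof -
  have "(\<Sum>n<K. ennreal (1 / fact n) * tree_integral n q) \<le> ennreal (exp (a q))" for K q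
  proof (induction K arbitrary: q)
    case 0
    then show ?case by simp
  next
    case (Suc K)
    have "(\<Sum>j<K. ennreal (1 / fact j) * branch_integral j q) =
        (\<integral>\<^sup>+y. w q y * (\<Sum>n<K. ennreal (1 / fact n) * tree_integral n y) \<partial>M)"
      by (rule nn_integral_w_partial_tree_series[symmetric])
    also have "\<dots> \<le> (\<integral>\<^sup>+y. w q y * ennreal (exp (a y)) \<partial>M)"
      using Suc.IH by (intro nn_integral_mono mult_left_mono) auto
    also have "\<dots> \<le> ennreal (a q)"
      by (rule sub)
    finally have "(\<Sum>n\<le>K. ennreal (1 / fact n) * tree_integral n q) \<le> ennreal (exp (a q))"
      using binomial_recursion_partial_sum_le_exp[where G = "\<lambda>n. tree_integral n q" and
          g = "\<lambda>j. branch_integral j q", OF tree_integral_0 tree_integral_Suc nonneg] by simp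
    then show ?case
      by (simp add: lessThan_Suc_atMost)
  qed
  then show ?thesis
    unfolding tree_series_def by (intro suminf_le_const summableI)
qed

theorem tree_series_finite_iff:
  "(\<forall>q. tree_series q < \<infinity>) \<longleftrightarrow>
    (\<exists>a. a \<in> borel_measurable M \<and> (\<forall>x. 0 \<le> a x) \<and>
      (\<forall>q. (\<integral>\<^sup>+y. w q y * ennreal (exp (a y)) \<partial>M) \<le> ennreal (a q)))"
proof
  assume fin: "\<forall>q. tree_series q < \<infinity>"
  define a where "a q = ln (enn2real (tree_series q))" for q
  have T_ge_1: "1 \<le> enn2real (tree_series q)" for q
    using enn2real_mono[OF one_le_tree_series, of q] fin by simp
  have exp_a: "ennreal (exp (a q)) = tree_series q" for q
    using T_ge_1[of q] fin by (simp add: a_def)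
  have "a \<in> borel_measurable M"
    unfolding a_def tree_series_def by measurable
  moreover have "\<forall>x. 0 \<le> a x"
    using T_ge_1 by (simp add: a_def)
  moreover have "(\<integral>\<^sup>+y. w q y * ennreal (exp (a y)) \<partial>M) \<le> ennreal (a q)" for q
    unfolding exp_a using nn_integral_w_tree_series_le_ln fin by (simp add: a_def)
  ultimately show "\<exists>a. a \<in> borel_measurable M \<and> (\<forall>x. 0 \<le> a x) \<and>
      (\<forall>q. (\<integral>\<^sup>+y. w q y * ennreal (exp (a y)) \<partial>M) \<le> ennreal (a q))"
    by blast
next
  assume "\<exists>a. a \<in> borel_measurable M \<and> (\<forall>x. 0 \<le> a x) \<and>
      (\<forall>q. (\<integral>\<^sup>+y. w q y * ennreal (exp (a y)) \<partial>M) \<le> ennreal (a q))"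
  then obtain a where "\<And>x. 0 \<le> a x" "\<And>q. (\<integral>\<^sup>+y. w q y * ennreal (exp (a y)) \<partial>M) \<le> ennreal (a q)"
    by blast
  then show "\<forall>q. tree_series q < \<infinity>"
    using tree_series_le_exp by (metis ennreal_less_top infinity_ennreal_def le_less_trans)
qed

end

section \<open>Mayer weights\<close>

lemma sigma_finite_if_finite_on_bounded:
  fixes lam :: "'a::metric_space measure"
  assumes sets_lam: "sets lam = sets borel"
    and lam_bdd: "\<And>B. B \<in> sets borel \<Longrightarrow> bounded B \<Longrightarrow> emeasure lam B < \<infinity>"
  shows "sigma_finite_measure lam"
proof
  let ?A = "range (\<lambda>n::nat. ball (undefined :: 'a) (real n))"
  have "\<Union> ?A = UNIV"
    by (auto simp: dist_commute intro: reals_Archimedean2)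
  moreover have "?A \<subseteq> sets lam"
    by (auto simp: sets_lam)
  moreover have "\<forall>a\<in>?A. emeasure lam a \<noteq> \<infinity>"
    using less_imp_neq[OF lam_bdd[OF borel_open[OF open_ball] bounded_ball]] by blast
  ultimately show "\<exists>A. countable A \<and> A \<subseteq> sets lam \<and> \<Union> A = space lam \<and> (\<forall>a\<in>A. emeasure lam a \<noteq> \<infinity>)"
    using sets_eq_imp_space_eq[OF sets_lam] by (intro exI[of _ ?A]) auto
qed

lemma symmetric_kernel_lam_z_mayer_abs:
  fixes lam :: "'a::metric_space measure"
  assumes sets_lam: "sets lam = sets borel"
    and lam_bdd: "\<And>B. B \<in> sets borel \<Longrightarrow> bounded B \<Longrightarrow> emeasure lam B < \<infinity>"
    and v_meas: "(\<lambda>p. v (fst p) (snd p)) \<in> borel_measurable (borel \<Otimes>\<^sub>M borel)"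
    and v_sym: "\<And>x y. v x y = v y x"
    and z_meas: "z \<in> borel_measurable borel"
  shows "symmetric_kernel (lam_z lam z) (mayer_abs v)"
proof -
  interpret lam: sigma_finite_measure lam
    using sets_lam lam_bdd by (rule sigma_finite_if_finite_on_bounded)
  have sets_lam_z: "sets (lam_z lam z) = sets borel"
    by (simp add: lam_z_def sets_lam)
  have "(\<lambda>x. ennreal (z x)) \<in> borel_measurable lam"
    using z_meas by (simp add: measurable_cong_sets[OF sets_lam refl])
  then have "sigma_finite_measure (lam_z lam z)"
    unfolding lam_z_def by (simp add: lam.sigma_finite_iff_density_finite)
  moreover have "(\<lambda>p. mayer_abs v (fst p) (snd p)) \<in> borel_measurable (lam_z lam z \<Otimes>\<^sub>M lam_z lam z)"
    unfolding measurable_cong_sets[OF sets_pair_measure_cong[OF sets_lam_z sets_lam_z] refl]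
    unfolding mayer_abs_def using v_meas by measurable
  ultimately show ?thesis
    using sets_eq_imp_space_eq[OF sets_lam_z] v_sym
    by (simp add: symmetric_kernel_def symmetric_kernel_axioms_def mayer_abs_def)
qed

lemma T_circ_eq_tree_series:
  assumes "symmetric_kernel (lam_z lam z) (mayer_abs v)"
  shows "T_circ lam v z q = symmetric_kernel.tree_series (lam_z lam z) (mayer_abs v) q"
proof -
  interpret symmetric_kernel "lam_z lam z" "mayer_abs v"
    by fact
  have "insert 0 {1..n} = {0..n}" for n :: nat
    by auto
  then have "T_circ lam v z q = 1 + (\<Sum>m. ennreal (1 / fact (Suc m)) * tree_integral (Suc m) q)"
    by (simp add: T_circ_def trees_def tree_integral_def rooted_tree_integral_def tree_weight_def)
  also have "\<dots> = tree_series q"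
    using sums_unique[OF sums_Suc[OF summable_sums[OF summableI]],
        of "\<lambda>n. ennreal (1 / fact n) * tree_integral n q"]
    by (simp add: tree_series_def tree_integral_0 add.commute del: fact_Suc)
  finally show ?thesis .
qed

theorem mainTheorem8:
  fixes lam :: "'a::polish_space measure"
    and v :: "'a \<Rightarrow> 'a \<Rightarrow> ennreal"
    and z :: "'a \<Rightarrow> real"
  assumes sets_lam: "sets lam = sets borel"
    and lam_bdd: "\<And>B. B \<in> sets borel \<Longrightarrow> bounded B \<Longrightarrow> emeasure lam B < \<infinity>"
    and v_meas: "(\<lambda>p. v (fst p) (snd p)) \<in> borel_measurable (borel \<Otimes>\<^sub>M borel)"
    and v_sym: "\<And>x y. v x y = v y x"
    and z_meas: "z \<in> borel_measurable borel"
    and z_nonneg: "\<And>x. z x \<ge> 0"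
  shows "(\<forall>q. T_circ lam v z q < \<infinity>) \<longleftrightarrow>
         (\<exists>a :: 'a \<Rightarrow> real. a \<in> borel_measurable borel \<and> (\<forall>x. a x \<ge> 0) \<and>
            (\<forall>q. (\<integral>\<^sup>+ y. mayer_abs v q y * ennreal (exp (a y)) \<partial>(lam_z lam z)) \<le> ennreal (a q)))"
proof -
  have kernel: "symmetric_kernel (lam_z lam z) (mayer_abs v)"
    using sets_lam lam_bdd v_meas v_sym z_meas by (rule symmetric_kernel_lam_z_mayer_abs)
  have "(borel_measurable (lam_z lam z) :: ('a \<Rightarrow> real) set) = borel_measurable borel"
    by (rule measurable_cong_sets) (simp_all add: lam_z_def sets_lam)
  then show ?thesis
    using symmetric_kernel.tree_series_finite_iff[OF kernel] T_circ_eq_tree_series[OF kernel] by simp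
qed

end
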